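(* Let $X$ have a shrinking $K$-unconditional finite dimensional decomposition and let $T$ be a bounded linear operator from $X$ onto a Banach space $Y$. Then $Y$ contains a subspace isomorphic to $c_0$ if and only if $T$ fixes a copy of $c_0$, i.e. there is a subspace $Z\subseteq X$ isomorphic to $c_0$ such that $T|_Z$ is an isomorphism onto its image.
   Context: A finite dimensional decomposition $(E_i)$ of $X$ is $K$-unconditional if $\|\sum \pm x_i\|\le K\|\sum x_i\|$ for all $x_i\in E_i$ and all choices of signs; it is shrinking if $(E_i^* )$ gives an f.d.d. of $X^*$. *)

theory Defs
  imports "HOL-Analysis.Analysis"
begin

definition fin_dim_subspace :: "'a::real_normed_vector set \<Rightarrow> bool" where
  "fin_dim_subspace S \<longleftrightarrow> subspace S \<and> (\<exists>B. finite B \<and> S = span B)"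

definition is_fdd :: "(nat \<Rightarrow> 'a::real_normed_vector set) \<Rightarrow> bool" where
  "is_fdd E \<longleftrightarrow> (\<forall>n. fin_dim_subspace (E n)) \<and>
     (\<forall>x. \<exists>!u. (\<forall>n. u n \<in> E n) \<and> u sums x)"

definition fdd_proj :: "(nat \<Rightarrow> 'a::real_normed_vector set) \<Rightarrow> nat \<Rightarrow> 'a \<Rightarrow> 'a" where
  "fdd_proj E n x = (THE u. (\<forall>k. u k \<in> E k) \<and> u sums x) n"

text \<open>The dual subspaces E n* = range of the adjoint of P n inside X*,
i.e. the functionals g with g = g o P n.\<close>
definition fdd_dual :: "(nat \<Rightarrow> 'a::real_normed_vector set) \<Rightarrow> nat \<Rightarrow> ('a \<Rightarrow>\<^sub>L real) set" where
  "fdd_dual E n = {g. \<forall>x. blinfun_apply g x = blinfun_apply g (fdd_proj E n x)}"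

definition shrinking_fdd :: "(nat \<Rightarrow> 'a::real_normed_vector set) \<Rightarrow> bool" where
  "shrinking_fdd E \<longleftrightarrow> is_fdd E \<and> is_fdd (fdd_dual E)"

definition unconditional_fdd :: "real \<Rightarrow> (nat \<Rightarrow> 'a::real_normed_vector set) \<Rightarrow> bool" where
  "unconditional_fdd K E \<longleftrightarrow> is_fdd E \<and>
     (\<forall>n (x::nat \<Rightarrow> 'a) (s::nat \<Rightarrow> real). (\<forall>i. x i \<in> E i) \<longrightarrow> (\<forall>i. s i = 1 \<or> s i = -1) \<longrightarrow>
        norm (\<Sum>i<n. s i *\<^sub>R x i) \<le> K * norm (\<Sum>i<n. x i))"

definition c0 :: "(nat \<Rightarrow> real) set" where
  "c0 = {a. a \<longlonglongrightarrow> 0}"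

definition sup_norm :: "(nat \<Rightarrow> real) \<Rightarrow> real" where
  "sup_norm a = (SUP n. \<bar>a n\<bar>)"

text \<open>J is an isomorphic embedding of c_0 into a normed space; its image J ` c0
is then a subspace isomorphic to c_0 (and every such subspace arises this way).\<close>
definition c0_embedding :: "((nat \<Rightarrow> real) \<Rightarrow> 'b::real_normed_vector) \<Rightarrow> bool" where
  "c0_embedding J \<longleftrightarrow>
     (\<forall>a\<in>c0. \<forall>b\<in>c0. J (\<lambda>n. a n + b n) = J a + J b) \<and>
     (\<forall>c. \<forall>a\<in>c0. J (\<lambda>n. c * a n) = c *\<^sub>R J a) \<and>
     (\<exists>m M. 0 < m \<and> (\<forall>a\<in>c0. m * sup_norm a \<le> norm (J a) \<and> norm (J a) \<le> M * sup_norm a))"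

definition contains_c0 :: "'b::real_normed_vector itself \<Rightarrow> bool" where
  "contains_c0 _ \<longleftrightarrow> (\<exists>J :: (nat \<Rightarrow> real) \<Rightarrow> 'b. c0_embedding J)"

definition fixes_copy_of_c0 :: "('a::real_normed_vector \<Rightarrow> 'b::real_normed_vector) \<Rightarrow> bool" where
  "fixes_copy_of_c0 T \<longleftrightarrow> (\<exists>J :: (nat \<Rightarrow> real) \<Rightarrow> 'a. c0_embedding J \<and>
     (\<exists>m>0. \<forall>z\<in>J ` c0. m * norm z \<le> norm (T z)))"

end

(*
  One direction is immediate: if T is an isomorphism on a copy Z of c_0, then T(Z) is a copy
  of c_0 in Y.  Conversely, let J embed c_0 into Y and extend its coordinate functionals to Y
  by Hahn-Banach.  Along a subsequence they converge on the images of finite spanning sets of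
  the pieces E_n, so the differences psi_i of consecutive pairs are null on every T(E_n).  By
  the open mapping theorem the staircase vectors J(e_r0 + ... + e_r(2M-2)) lift to a bounded
  sequence w_M in X with psi_i(T w_M) = 1 for i < M and 0 otherwise.  A diagonal argument
  makes every coordinate of w_M converge, to omega_n in E_n; unconditionality bounds the
  partial sums Omega_N of the omega_n, and shrinking gives psi_i(T Omega_N) -> 1 as N grows,
  while psi_i(T Omega_N) -> 0 as i grows for fixed N.  A gliding hump now selects blocks
  g_l = Omega_p(l+1) - Omega_p(l) together with functionals psi_idx(k) that are almost
  biorthogonal to them.  Unconditionality gives the upper c_0-estimate for sums of the g_l
  and the functionals the lower estimate for their images under T, so x |-> sum x_l g_l is a
  copy of c_0 on which T is an isomorphism.
*)

theory Submission
  imports Defs "HOL-Library.Diagonal_Subsequence"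
begin

section \<open>Hahn--Banach for real normed spaces\<close>

text \<open>Partial extensions are represented by their graphs, so that Zorn's lemma can be
applied to the inclusion order on sets of pairs.\<close>

definition dominated_graphs :: "'a::real_normed_vector set \<Rightarrow> ('a \<Rightarrow> real) \<Rightarrow> real \<Rightarrow> ('a \<times> real) set set" where
  "dominated_graphs V f c = {G.
     (\<forall>v\<in>V. (v, f v) \<in> G) \<and>
     (\<forall>x y z. (x, y) \<in> G \<longrightarrow> (x, z) \<in> G \<longrightarrow> y = z) \<and>
     (\<forall>x y x' y'. (x, y) \<in> G \<longrightarrow> (x', y') \<in> G \<longrightarrow> (x + x', y + y') \<in> G) \<and>
     (\<forall>x y a. (x, y) \<in> G \<longrightarrow> (a *\<^sub>R x, a * y) \<in> G) \<and>
     (\<forall>x y. (x, y) \<in> G \<longrightarrow> y \<le> c * norm x)}"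

lemma dominated_graphsD:
  assumes "G \<in> dominated_graphs V f c"
  shows dominated_graphs_extends: "\<And>v. v \<in> V \<Longrightarrow> (v, f v) \<in> G"
    and dominated_graphs_functional: "\<And>x y z. (x, y) \<in> G \<Longrightarrow> (x, z) \<in> G \<Longrightarrow> y = z"
    and dominated_graphs_add: "\<And>x y x' y'. (x, y) \<in> G \<Longrightarrow> (x', y') \<in> G \<Longrightarrow> (x + x', y + y') \<in> G"
    and dominated_graphs_scale: "\<And>x y a. (x, y) \<in> G \<Longrightarrow> (a *\<^sub>R x, a * y) \<in> G"
    and dominated_graphs_bound: "\<And>x y. (x, y) \<in> G \<Longrightarrow> y \<le> c * norm x"
  using assms unfolding dominated_graphs_def by blast+

lemma dominated_graphs_chain_Union:
  assumes "C \<in> chains (dominated_graphs V f c)" and "C \<noteq> {}"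
  shows "\<Union>C \<in> dominated_graphs V f c"
proof -
  have CD: "C \<subseteq> dominated_graphs V f c" and chain: "\<And>X Y. X \<in> C \<Longrightarrow> Y \<in> C \<Longrightarrow> X \<subseteq> Y \<or> Y \<subseteq> X"
    using assms(1) unfolding chains_def chain_subset_def by blast+
  have two: "\<exists>Z\<in>C. p \<in> Z \<and> q \<in> Z" if "p \<in> \<Union>C" "q \<in> \<Union>C" for p q
    using that chain by blast
  show ?thesis
    unfolding dominated_graphs_def
  proof (intro CollectI conjI allI impI ballI)
    fix v assume "v \<in> V"
    then show "(v, f v) \<in> \<Union>C"
      using assms(2) CD dominated_graphs_extends by blast
  next
    fix x y z assume "(x, y) \<in> \<Union>C" "(x, z) \<in> \<Union>C"
    then show "y = z" using two CD dominated_graphs_functional by (metis subsetD)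
  next
    fix x y x' y' assume "(x, y) \<in> \<Union>C" "(x', y') \<in> \<Union>C"
    then show "(x + x', y + y') \<in> \<Union>C" using two CD dominated_graphs_add by (metis UnionI subsetD)
  qed (use CD dominated_graphs_scale dominated_graphs_bound in blast)+
qed

lemma dominated_graph_one_step_value:
  assumes G: "G \<in> dominated_graphs V f c" and c: "c \<ge> 0" and "(0, 0) \<in> G"
  obtains \<alpha> where "\<And>u y t. (u, y) \<in> G \<Longrightarrow> y + t * \<alpha> \<le> c * norm (u + t *\<^sub>R x0)"
proof -
  note add = dominated_graphs_add[OF G] and scale = dominated_graphs_scale[OF G]
    and bound = dominated_graphs_bound[OF G]
  define S where "S = {y - c * norm (u - x0) | u y. (u, y) \<in> G}"
  have S_le: "s \<le> c * norm (v + x0) - y'" if "s \<in> S" "(v, y') \<in> G" for s v y'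
  proof -
    obtain u y where s: "s = y - c * norm (u - x0)" and uy: "(u, y) \<in> G"
      using \<open>s \<in> S\<close> unfolding S_def by blast
    have "y + y' \<le> c * norm (u + v)" using bound[OF add[OF uy \<open>(v, y') \<in> G\<close>]] .
    also have "\<dots> \<le> c * (norm (u - x0) + norm (v + x0))"
      using norm_triangle_ineq[of "u - x0" "v + x0"] c by (intro mult_left_mono) simp_all
    finally show ?thesis using s by (simp add: algebra_simps)
  qed
  have "S \<noteq> {}" using \<open>(0, 0) \<in> G\<close> unfolding S_def by blast
  have "bdd_above S" using S_le[OF _ \<open>(0, 0) \<in> G\<close>] by (simp add: bdd_above_def) blast
  define \<alpha> where "\<alpha> = Sup S"
  have below: "y - c * norm (u - x0) \<le> \<alpha>" if "(u, y) \<in> G" for u y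
    unfolding \<alpha>_def using that \<open>bdd_above S\<close> by (auto intro!: cSup_upper simp: S_def)
  have above: "\<alpha> \<le> c * norm (v + x0) - y'" if "(v, y') \<in> G" for v y'
    unfolding \<alpha>_def using \<open>S \<noteq> {}\<close> S_le that by (blast intro: cSup_least)
  have "y + t * \<alpha> \<le> c * norm (u + t *\<^sub>R x0)" if uy: "(u, y) \<in> G" for u y t
  proof (cases t "0 :: real" rule: linorder_cases)
    case less
    have "(- 1 / t) *\<^sub>R u - x0 = (- 1 / t) *\<^sub>R (u + t *\<^sub>R x0)"
      using less by (simp add: algebra_simps)
    then have "norm ((- 1 / t) *\<^sub>R u - x0) = (- 1 / t) * norm (u + t *\<^sub>R x0)"
      using less by simp
    then have "(- 1 / t) * y - c * ((- 1 / t) * norm (u + t *\<^sub>R x0)) \<le> \<alpha>"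
      using below[OF scale[OF uy, of "- 1 / t"]] by simp
    then show ?thesis using less by (simp add: field_simps)
  next
    case equal
    then show ?thesis using bound[OF uy] by simp
  next
    case greater
    have "(1 / t) *\<^sub>R u + x0 = (1 / t) *\<^sub>R (u + t *\<^sub>R x0)"
      using greater by (simp add: algebra_simps)
    then have "norm ((1 / t) *\<^sub>R u + x0) = (1 / t) * norm (u + t *\<^sub>R x0)"
      using greater by simp
    then have "\<alpha> \<le> c * ((1 / t) * norm (u + t *\<^sub>R x0)) - (1 / t) * y"
      using above[OF scale[OF uy, of "1 / t"]] by simp
    then show ?thesis using greater by (simp add: field_simps)
  qed
  then show ?thesis using that by blast
qed

lemma dominated_graph_decomposition_unique:
  assumes G: "G \<in> dominated_graphs V f c" and x0: "\<And>y. (x0, y) \<notin> G"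
    and "(u, y) \<in> G" "(u', y') \<in> G" "u + t *\<^sub>R x0 = u' + t' *\<^sub>R x0"
  shows "t = t' \<and> u = u'"
proof (rule ccontr)
  assume "\<not> ?thesis"
  then have "t \<noteq> t'" using assms(5) by auto
  have "(t - t') *\<^sub>R x0 = u' - u" using assms(5) by (simp add: algebra_simps)
  then have "(1 / (t - t')) *\<^sub>R ((t - t') *\<^sub>R x0) = (1 / (t - t')) *\<^sub>R (u' + (- 1) *\<^sub>R u)"
    by simp
  then have x0_eq: "x0 = (1 / (t - t')) *\<^sub>R (u' + (- 1) *\<^sub>R u)"
    using \<open>t \<noteq> t'\<close> by simp
  have "(x0, (1 / (t - t')) * (y' + (- 1) * y)) \<in> G"
    unfolding x0_eq using assms(3,4)
    by (intro dominated_graphs_scale[OF G] dominated_graphs_add[OF G]) (auto intro: dominated_graphs_scale[OF G])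
  then show False using x0 by blast
qed

lemma dominated_graph_extend:
  assumes G: "G \<in> dominated_graphs V f c" and c: "c \<ge> 0" and "0 \<in> V"
    and x0: "\<And>y. (x0, y) \<notin> G"
  shows "\<exists>G'\<in>dominated_graphs V f c. G \<subset> G'"
proof -
  note functional = dominated_graphs_functional[OF G] and add = dominated_graphs_add[OF G]
    and scale = dominated_graphs_scale[OF G]
  have "(0, 0) \<in> G" using scale[OF dominated_graphs_extends[OF G \<open>0 \<in> V\<close>], of 0] by simp
  then obtain \<alpha> where \<alpha>: "\<And>u y t. (u, y) \<in> G \<Longrightarrow> y + t * \<alpha> \<le> c * norm (u + t *\<^sub>R x0)"
    using dominated_graph_one_step_value[OF G c] by blast
  define G' where "G' = {(u + t *\<^sub>R x0, y + t * \<alpha>) | u y t. (u, y) \<in> G}"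
  have G'I: "(u + t *\<^sub>R x0, y + t * \<alpha>) \<in> G'" if "(u, y) \<in> G" for u y t
    unfolding G'_def using that by blast
  have unique: "t = t' \<and> u = u'"
    if "(u, y) \<in> G" "(u', y') \<in> G" "u + t *\<^sub>R x0 = u' + t' *\<^sub>R x0" for u y u' y' t t'
    using dominated_graph_decomposition_unique[OF G x0 that] .
  have "G' \<in> dominated_graphs V f c"
    unfolding dominated_graphs_def
  proof (intro CollectI conjI allI impI ballI)
    fix v assume "v \<in> V"
    then show "(v, f v) \<in> G'"
      using G'I[of v "f v" 0] dominated_graphs_extends[OF G] by simp
  next
    fix x y z assume "(x, y) \<in> G'" "(x, z) \<in> G'"
    then obtain u1 y1 t1 u2 y2 t2 where "(u1, y1) \<in> G" "(u2, y2) \<in> G"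
      and "x = u1 + t1 *\<^sub>R x0" "y = y1 + t1 * \<alpha>" "x = u2 + t2 *\<^sub>R x0" "z = y2 + t2 * \<alpha>"
      unfolding G'_def by blast
    then show "y = z" using unique functional by metis
  next
    fix x y x' y' assume "(x, y) \<in> G'" "(x', y') \<in> G'"
    then obtain u1 y1 t1 u2 y2 t2 where "(u1, y1) \<in> G" "(u2, y2) \<in> G"
      and "x = u1 + t1 *\<^sub>R x0" "y = y1 + t1 * \<alpha>" "x' = u2 + t2 *\<^sub>R x0" "y' = y2 + t2 * \<alpha>"
      unfolding G'_def by blast
    then show "(x + x', y + y') \<in> G'"
      using G'I[OF add, of u1 y1 u2 y2 "t1 + t2"] by (simp add: algebra_simps)
  next
    fix x y a assume "(x, y) \<in> G'"
    then obtain u1 y1 t1 where "(u1, y1) \<in> G" "x = u1 + t1 *\<^sub>R x0" "y = y1 + t1 * \<alpha>"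
      unfolding G'_def by blast
    then show "(a *\<^sub>R x, a * y) \<in> G'"
      using G'I[OF scale, of u1 y1 a "a * t1"] by (simp add: algebra_simps)
  next
    fix x y assume "(x, y) \<in> G'"
    then show "y \<le> c * norm x" unfolding G'_def using \<alpha> by blast
  qed
  moreover have "G \<subseteq> G'" using G'I[where t = 0] by auto
  moreover have "(x0, \<alpha>) \<in> G'" using G'I[OF \<open>(0, 0) \<in> G\<close>, of 1] by simp
  ultimately show ?thesis using x0 by blast
qed

theorem hahn_banach_dominated:
  fixes f :: "'a::real_normed_vector \<Rightarrow> real"
  assumes V: "subspace V"
    and f_add: "\<And>x y. x \<in> V \<Longrightarrow> y \<in> V \<Longrightarrow> f (x + y) = f x + f y"
    and f_scale: "\<And>x a. x \<in> V \<Longrightarrow> f (a *\<^sub>R x) = a * f x"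
    and f_bound: "\<And>x. x \<in> V \<Longrightarrow> \<bar>f x\<bar> \<le> c * norm x" and c: "c \<ge> 0"
  shows "\<exists>g. bounded_linear g \<and> (\<forall>x\<in>V. g x = f x) \<and> (\<forall>x. \<bar>g x\<bar> \<le> c * norm x)"
proof -
  define G0 where "G0 = {(v, f v) | v. v \<in> V}"
  have "G0 \<in> dominated_graphs V f c"
    unfolding dominated_graphs_def G0_def
    using f_add f_scale f_bound subspace_add[OF V] subspace_scale[OF V] by (auto simp: abs_le_iff)
  then have "\<forall>C\<in>chains (dominated_graphs V f c). \<exists>U\<in>dominated_graphs V f c. \<forall>X\<in>C. X \<subseteq> U"
    using dominated_graphs_chain_Union by (metis Union_upper empty_iff)
  then obtain M where M: "M \<in> dominated_graphs V f c"
    and maximal: "\<And>X. X \<in> dominated_graphs V f c \<Longrightarrow> M \<subseteq> X \<Longrightarrow> X = M"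
    using Zorn_Lemma2 by force
  note functional = dominated_graphs_functional[OF M] and bound = dominated_graphs_bound[OF M]
  have "\<exists>y. (x, y) \<in> M" for x
    using dominated_graph_extend[OF M c subspace_0[OF V], of x] maximal by blast
  then obtain g where graph: "\<And>x. (x, g x) \<in> M" by metis
  then have g_eq: "g x = y" if "(x, y) \<in> M" for x y
    using functional that by blast
  have g_bound: "\<bar>g x\<bar> \<le> c * norm x" for x
    using bound[OF graph[of x]] bound[OF dominated_graphs_scale[OF M graph[of x], of "- 1"]]
    by (simp add: abs_le_iff)
  have "bounded_linear g"
  proof (rule bounded_linear_intro[where K = c])
    show "g (x + y) = g x + g y" for x y
      by (rule g_eq[OF dominated_graphs_add[OF M graph graph]])
    show "g (r *\<^sub>R x) = r *\<^sub>R g x" for r x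
      using g_eq[OF dominated_graphs_scale[OF M graph]] by simp
    show "norm (g x) \<le> norm x * c" for x
      using g_bound[of x] by (simp add: mult.commute)
  qed
  moreover have "\<forall>x\<in>V. g x = f x"
    using g_eq dominated_graphs_extends[OF M] by blast
  ultimately show ?thesis using g_bound by blast
qed

section \<open>The open mapping theorem\<close>

lemma surj_bounded_linear_ball_in_closure:
  fixes T :: "'a::real_normed_vector \<Rightarrow> 'b::banach"
  assumes "bounded_linear T" and "surj T"
  obtains n :: nat and y0 r where "r > 0" and "ball y0 r \<subseteq> closure (T ` cball 0 (real n))"
proof -
  define \<G> where "\<G> = range (\<lambda>n::nat. closure (T ` cball 0 (real n)))"
  have "y \<in> \<Union>\<G>" for y
  proof -
    obtain x where "y = T x" using \<open>surj T\<close> by (metis surjD)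
    moreover obtain n :: nat where "norm x \<le> real n" using real_arch_simple by blast
    ultimately have "y \<in> closure (T ` cball 0 (real n))" using closure_subset by fastforce
    then show ?thesis unfolding \<G>_def by blast
  qed
  then have "\<Union>\<G> = UNIV" by blast
  have "\<exists>F\<in>\<G>. interior F \<noteq> {}"
  proof (rule ccontr)
    assume "\<not> ?thesis"
    then have "euclidean interior_of \<Union>\<G> = {}"
      by (intro Baire_category_alt)
        (auto simp: \<G>_def completely_metrizable_space_euclidean closed_closedin[symmetric])
    then show False using \<open>\<Union>\<G> = UNIV\<close> by simp
  qed
  then obtain n :: nat and y0 where "y0 \<in> interior (closure (T ` cball 0 (real n)))"
    unfolding \<G>_def by blast
  then obtain r where "r > 0" "ball y0 r \<subseteq> closure (T ` cball 0 (real n))"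
    unfolding mem_interior by blast
  then show ?thesis using that by blast
qed

lemma approximate_preimage_in_ball:
  fixes T :: "'a::real_normed_vector \<Rightarrow> 'b::real_normed_vector"
  assumes "linear T" and ball: "ball y0 r \<subseteq> closure (T ` cball 0 \<rho>)"
    and y: "norm y < r" and \<epsilon>: "\<epsilon> > 0"
  shows "\<exists>x. norm x \<le> 2 * \<rho> \<and> norm (y - T x) < \<epsilon>"
proof -
  have near: "\<exists>a\<in>cball 0 \<rho>. dist (T a) z < \<epsilon> / 2" if "z \<in> ball y0 r" for z
  proof -
    have "z \<in> closure (T ` cball 0 \<rho>)" using ball that by blast
    then obtain w where "w \<in> T ` cball 0 \<rho>" "dist w z < \<epsilon> / 2"
      using closure_approachable \<epsilon> by (meson half_gt_zero)
    then show ?thesis by blast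
  qed
  have "y0 + y \<in> ball y0 r" using y by (simp add: dist_norm)
  then obtain a where a: "a \<in> cball 0 \<rho>" "dist (T a) (y0 + y) < \<epsilon> / 2"
    using near by blast
  have "y0 \<in> ball y0 r" using y norm_ge_zero[of y] by (simp del: norm_ge_zero)
  then obtain b where b: "b \<in> cball 0 \<rho>" "dist (T b) y0 < \<epsilon> / 2"
    using near by blast
  have "norm (a - b) \<le> 2 * \<rho>"
    using a(1) b(1) norm_triangle_ineq4[of a b] by (simp add: dist_norm)
  moreover have "norm (y - T (a - b)) \<le> dist (T a) (y0 + y) + dist (T b) y0"
    using norm_triangle_ineq[of "y0 + y - T a" "T b - y0"]
    by (simp add: linear_diff[OF \<open>linear T\<close>] dist_norm norm_minus_commute algebra_simps)
  ultimately show ?thesis using a(2) b(2) by (intro exI[of _ "a - b"]) auto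
qed

lemma surj_bounded_linear_approximate_preimage:
  fixes T :: "'a::real_normed_vector \<Rightarrow> 'b::banach"
  assumes "bounded_linear T" and "surj T"
  obtains R where "R \<ge> 0" and "\<And>y \<epsilon>. \<epsilon> > 0 \<Longrightarrow> \<exists>x. norm x \<le> R * norm y \<and> norm (y - T x) < \<epsilon>"
proof -
  interpret T: bounded_linear T by fact
  obtain n :: nat and y0 r where r: "r > 0" and ball: "ball y0 r \<subseteq> closure (T ` cball 0 (real n))"
    using surj_bounded_linear_ball_in_closure[OF assms] .
  note small = approximate_preimage_in_ball[OF T.linear ball]
  define R where "R = 4 * real n / r"
  have "\<exists>x. norm x \<le> R * norm y \<and> norm (y - T x) < \<epsilon>" if \<epsilon>: "\<epsilon> > 0" for y \<epsilon>
  proof (cases "y = 0")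
    case True
    then show ?thesis using \<epsilon> by (intro exI[of _ 0]) simp
  next
    case False
    define k where "k = 2 * norm y / r"
    have k: "k > 0" using False r by (simp add: k_def)
    have "norm ((1 / k) *\<^sub>R y) < r" using False r by (simp add: k_def)
    then obtain x where x: "norm x \<le> 2 * real n" "norm ((1 / k) *\<^sub>R y - T x) < \<epsilon> / k"
      using small[of "(1 / k) *\<^sub>R y" "\<epsilon> / k"] k \<epsilon> by auto
    have "norm (k *\<^sub>R x) \<le> R * norm y"
      using mult_left_mono[OF x(1), of k] k r by (simp add: k_def R_def field_simps)
    moreover have "y - T (k *\<^sub>R x) = k *\<^sub>R ((1 / k) *\<^sub>R y - T x)"
      using k by (simp add: T.scaleR algebra_simps)
    then have "norm (y - T (k *\<^sub>R x)) = k * norm ((1 / k) *\<^sub>R y - T x)"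
      using k by simp
    ultimately show ?thesis using x(2) k by (intro exI[of _ "k *\<^sub>R x"]) (simp add: field_simps)
  qed
  moreover have "R \<ge> 0" using r by (simp add: R_def)
  ultimately show ?thesis using that by blast
qed

text \<open>Successive approximation: correct the remaining error again and again; the
corrections form a geometrically convergent series.\<close>

lemma half_approximation_series:
  fixes T :: "'a::real_normed_vector \<Rightarrow> 'b::real_normed_vector"
  assumes "bounded_linear T" and "R \<ge> 0"
    and approx: "\<And>z. \<exists>x. norm x \<le> R * norm z \<and> norm (z - T x) \<le> norm z / 2"
  obtains xs where "\<And>k. norm (xs k) \<le> R * norm y * (1 / 2) ^ k" and "(\<lambda>k. T (xs k)) sums y"
proof -
  interpret T: bounded_linear T by fact
  have "\<forall>z. \<exists>x. norm x \<le> R * norm z \<and> norm (z - T x) \<le> norm z / 2"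
    using approx by blast
  from choice[OF this] obtain corr
    where corr: "\<And>z. norm (corr z) \<le> R * norm z" "\<And>z. norm (z - T (corr z)) \<le> norm z / 2"
    by blast
  define res where "res = rec_nat y (\<lambda>_ z. z - T (corr z))"
  have res_0: "res 0 = y" and res_Suc: "res (Suc k) = res k - T (corr (res k))" for k
    unfolding res_def by simp_all
  have res_bound: "norm (res k) \<le> norm y * (1 / 2) ^ k" for k
  proof (induction k)
    case 0
    show ?case by (simp add: res_0)
  next
    case (Suc k)
    have "norm (res (Suc k)) \<le> norm (res k) / 2" using corr(2)[of "res k"] by (simp add: res_Suc)
    also have "\<dots> \<le> norm y * (1 / 2) ^ k / 2" using Suc.IH by simp
    finally show ?case by simp
  qed
  define xs where "xs k = corr (res k)" for k
  have "norm (xs k) \<le> R * norm y * (1 / 2) ^ k" for k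
    using corr(1)[of "res k"] mult_left_mono[OF res_bound[of k] \<open>R \<ge> 0\<close>] by (simp add: xs_def)
  moreover have "(\<lambda>k. T (xs k)) sums y"
  proof -
    have "(\<Sum>k<n. T (xs k)) = y - res n" for n
      by (induction n) (simp_all add: res_0 res_Suc xs_def)
    moreover have "res \<longlonglongrightarrow> 0"
    proof (rule Lim_null_comparison)
      show "\<forall>\<^sub>F k in sequentially. norm (res k) \<le> norm y * (1 / 2) ^ k"
        using res_bound by simp
      show "(\<lambda>k. norm y * (1 / 2 :: real) ^ k) \<longlonglongrightarrow> 0"
        by (intro tendsto_mult_right_zero LIMSEQ_power_zero) simp
    qed
    then have "(\<lambda>n. y - res n) \<longlonglongrightarrow> y - 0" by (intro tendsto_diff) auto
    ultimately show ?thesis unfolding sums_def by simp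
  qed
  ultimately show ?thesis using that by blast
qed

lemma bounded_preimage_of_half_approximation:
  fixes T :: "'a::banach \<Rightarrow> 'b::real_normed_vector"
  assumes "bounded_linear T" and "R \<ge> 0"
    and approx: "\<And>z. \<exists>x. norm x \<le> R * norm z \<and> norm (z - T x) \<le> norm z / 2"
  shows "\<exists>x. T x = y \<and> norm x \<le> 2 * R * norm y"
proof -
  obtain xs where xs_bound: "\<And>k. norm (xs k) \<le> R * norm y * (1 / 2) ^ k"
    and "(\<lambda>k. T (xs k)) sums y"
    using half_approximation_series[OF assms] by blast
  have "(\<lambda>k. (1 / 2 :: real) ^ k) sums 2"
    using geometric_sums[of "1 / 2 :: real"] by simp
  then have geom: "(\<lambda>k. R * norm y * (1 / 2 :: real) ^ k) sums (R * norm y * 2)"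
    by (rule sums_mult)
  have summable: "summable (\<lambda>k. norm (xs k))"
    using xs_bound by (intro summable_comparison_test[OF _ sums_summable[OF geom]]) auto
  have "norm (suminf xs) \<le> (\<Sum>k. norm (xs k))"
    by (rule summable_norm[OF summable])
  also have "\<dots> \<le> (\<Sum>k. R * norm y * (1 / 2) ^ k)"
    by (rule suminf_le[OF xs_bound summable sums_summable[OF geom]])
  also have "\<dots> = 2 * R * norm y"
    using sums_unique[OF geom] by simp
  finally have "norm (suminf xs) \<le> 2 * R * norm y" .
  moreover have "T (suminf xs) = y"
    using bounded_linear.sums[OF assms(1) summable_sums[OF summable_norm_cancel[OF summable]]]
      \<open>(\<lambda>k. T (xs k)) sums y\<close> sums_unique2 by blast
  ultimately show ?thesis by blast
qed

theorem open_mapping_bounded_preimage: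
  fixes T :: "'a::banach \<Rightarrow> 'b::banach"
  assumes "bounded_linear T" and "surj T"
  obtains C where "C > 0" and "\<And>y. \<exists>x. T x = y \<and> norm x \<le> C * norm y"
proof -
  obtain R where "R \<ge> 0" and R: "\<And>y \<epsilon>. \<epsilon> > 0 \<Longrightarrow> \<exists>x. norm x \<le> R * norm y \<and> norm (y - T x) < \<epsilon>"
    using surj_bounded_linear_approximate_preimage[OF assms] by blast
  have "\<exists>x. norm x \<le> R * norm z \<and> norm (z - T x) \<le> norm z / 2" for z
    using R[of "norm z / 2" z] linear_0[OF bounded_linear.linear[OF assms(1)]]
    by (cases "z = 0") (auto intro: exI[of _ 0] less_imp_le)
  then have "\<exists>x. T x = y \<and> norm x \<le> 2 * R * norm y" for y
    using bounded_preimage_of_half_approximation[OF assms(1) \<open>R \<ge> 0\<close>] by blast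
  moreover have "2 * R * norm y \<le> (2 * R + 1) * norm y" for y :: 'b
    by (simp add: mult_right_mono)
  ultimately have "\<exists>x. T x = y \<and> norm x \<le> (2 * R + 1) * norm y" for y
    by (meson order_trans)
  moreover have "2 * R + 1 > 0" using \<open>R \<ge> 0\<close> by simp
  ultimately show ?thesis using that by blast
qed

section \<open>Bounded sequences in finite-dimensional subspaces\<close>

definition boundedly_compact :: "'a::metric_space set \<Rightarrow> bool" where
  "boundedly_compact S \<longleftrightarrow> (\<forall>x :: nat \<Rightarrow> 'a. (\<forall>n. x n \<in> S) \<and> bounded (range x) \<longrightarrow>
     (\<exists>l\<in>S. \<exists>r. strict_mono r \<and> (x \<circ> r) \<longlonglongrightarrow> l))"

lemma boundedly_compactD:
  fixes x :: "nat \<Rightarrow> 'a::metric_space"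
  assumes "boundedly_compact S" "\<And>n. x n \<in> S" "bounded (range x)"
  obtains l and r :: "nat \<Rightarrow> nat" where "l \<in> S" "strict_mono r" "(x \<circ> r) \<longlonglongrightarrow> l"
  using assms unfolding boundedly_compact_def by blast

lemma boundedly_compact_UNIV: "boundedly_compact (UNIV :: 'a::heine_borel set)"
  unfolding boundedly_compact_def using bounded_imp_convergent_subsequence by blast

lemma boundedly_compact_imp_closed:
  assumes "boundedly_compact S"
  shows "closed S"
  unfolding closed_sequential_limits
proof (intro allI impI)
  fix x :: "nat \<Rightarrow> 'a" and l assume x: "(\<forall>n. x n \<in> S) \<and> x \<longlonglongrightarrow> l"
  then obtain l' r where "l' \<in> S" "strict_mono r" "(x \<circ> r) \<longlonglongrightarrow> l'"
    using boundedly_compactD[OF assms] convergent_imp_bounded by metis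
  moreover have "(x \<circ> r) \<longlonglongrightarrow> l" using LIMSEQ_subseq_LIMSEQ x \<open>strict_mono r\<close> by blast
  ultimately show "l \<in> S" using LIMSEQ_unique by metis
qed

lemma span_insert_coefficient_bound:
  fixes b :: "'a::real_normed_vector"
  assumes "closed (span B)" and "b \<notin> span B"
  obtains e where "e > 0" and "\<And>y t. y \<in> span B \<Longrightarrow> \<bar>t\<bar> * e \<le> norm (y + t *\<^sub>R b)"
proof -
  obtain e where "e > 0" and e: "ball b e \<subseteq> - span B"
    using assms open_contains_ball[of "- span B"] by (auto simp: closed_def)
  have "\<bar>t\<bar> * e \<le> norm (y + t *\<^sub>R b)" if y: "y \<in> span B" for y t
  proof (cases "t = 0")
    case False
    have "- (1 / t) *\<^sub>R y \<in> span B" using y span_scale span_neg by blast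
    then have "e \<le> dist b (- (1 / t) *\<^sub>R y)" using e by (meson ComplD mem_ball not_le subsetD)
    also have "dist b (- (1 / t) *\<^sub>R y) = norm ((1 / t) *\<^sub>R (y + t *\<^sub>R b))"
      using False by (simp add: dist_norm algebra_simps)
    also have "\<dots> = norm (y + t *\<^sub>R b) / \<bar>t\<bar>" by simp
    finally show ?thesis using False by (simp add: field_simps)
  qed simp
  then show ?thesis using that \<open>e > 0\<close> by blast
qed

lemma boundedly_compact_span_insert:
  fixes B :: "'a::real_normed_vector set"
  assumes IH: "boundedly_compact (span B)"
  shows "boundedly_compact (span (insert b B))"
proof (cases "b \<in> span B")
  case True
  then show ?thesis using IH by (simp add: span_redundant)
next
  case False
  obtain e where "e > 0" and e: "\<And>y t. y \<in> span B \<Longrightarrow> \<bar>t\<bar> * e \<le> norm (y + t *\<^sub>R b)"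
    using span_insert_coefficient_bound[OF boundedly_compact_imp_closed[OF IH] False] by blast
  show ?thesis
    unfolding boundedly_compact_def
  proof (intro allI impI)
    fix x :: "nat \<Rightarrow> 'a" assume x: "(\<forall>n. x n \<in> span (insert b B)) \<and> bounded (range x)"
    then obtain M where "\<forall>z\<in>range x. norm z \<le> M" unfolding bounded_iff by blast
    then have M: "\<And>n. norm (x n) \<le> M" by blast
    have "\<forall>n. \<exists>t. x n - t *\<^sub>R b \<in> span B" using x span_breakdown_eq by blast
    from choice[OF this] obtain t where t: "\<And>n. x n - t n *\<^sub>R b \<in> span B" by blast
    define y where "y n = x n - t n *\<^sub>R b" for n
    have t_bound: "\<bar>t n\<bar> \<le> M / e" for n
      using e[OF t[of n], of "t n"] M[of n] \<open>e > 0\<close> by (simp add: field_simps)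
    then have "bounded (range t)" by (intro boundedI[where B = "M / e"]) auto
    then obtain l and r1 :: "nat \<Rightarrow> nat" where r1: "strict_mono r1" "(t \<circ> r1) \<longlonglongrightarrow> l"
      using bounded_imp_convergent_subsequence[of t] by blast
    have "norm (y n) \<le> M + M / e * norm b" for n
    proof -
      have "norm (y n) \<le> norm (x n) + \<bar>t n\<bar> * norm b"
        unfolding y_def using norm_triangle_ineq4[of "x n" "t n *\<^sub>R b"] by simp
      also have "\<dots> \<le> M + M / e * norm b"
        using M[of n] mult_right_mono[OF t_bound[of n] norm_ge_zero[of b]] by linarith
      finally show ?thesis .
    qed
    then have "bounded (range (y \<circ> r1))" by (intro boundedI) auto
    moreover have "(y \<circ> r1) n \<in> span B" for n using t by (simp add: y_def)
    ultimately obtain z and r2 :: "nat \<Rightarrow> nat" where "z \<in> span B" "strict_mono r2" "(y \<circ> r1 \<circ> r2) \<longlonglongrightarrow> z"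
      using boundedly_compactD[OF IH] by blast
    moreover have "(t \<circ> r1 \<circ> r2) \<longlonglongrightarrow> l" using LIMSEQ_subseq_LIMSEQ r1(2) \<open>strict_mono r2\<close> by blast
    ultimately have "(\<lambda>n. (y \<circ> r1 \<circ> r2) n + (t \<circ> r1 \<circ> r2) n *\<^sub>R b) \<longlonglongrightarrow> z + l *\<^sub>R b"
      by (intro tendsto_intros)
    then have "(x \<circ> (r1 \<circ> r2)) \<longlonglongrightarrow> z + l *\<^sub>R b" by (simp add: y_def o_def)
    moreover have "z + l *\<^sub>R b \<in> span (insert b B)"
      unfolding span_breakdown_eq using \<open>z \<in> span B\<close> by (intro exI[of _ l]) simp
    moreover have "strict_mono (r1 \<circ> r2)" using r1(1) \<open>strict_mono r2\<close> strict_mono_o by blast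
    ultimately show "\<exists>l\<in>span (insert b B). \<exists>r. strict_mono r \<and> (x \<circ> r) \<longlonglongrightarrow> l" by blast
  qed
qed

lemma boundedly_compact_span:
  fixes B :: "'a::real_normed_vector set"
  assumes "finite B"
  shows "boundedly_compact (span B)"
  using assms
proof (induction B rule: finite_induct)
  case empty
  have "(x \<circ> id) \<longlonglongrightarrow> 0" if "\<And>n. x n \<in> span {}" for x :: "nat \<Rightarrow> 'a"
    using that by (simp add: o_def)
  then show ?case unfolding boundedly_compact_def using strict_mono_id by auto
qed (rule boundedly_compact_span_insert)

lemma diagonal_convergent_subsequence:
  fixes f :: "nat \<Rightarrow> nat \<Rightarrow> 'a::metric_space"
  assumes S: "\<And>q. boundedly_compact (S q)" and f: "\<And>q i. f q i \<in> S q"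
    and bounded: "\<And>q. bounded (range (f q))"
  obtains r where "strict_mono r" and "\<And>q. \<exists>l\<in>S q. (\<lambda>i. f q (r i)) \<longlonglongrightarrow> l"
proof -
  interpret subseqs "\<lambda>q s. \<exists>l\<in>S q. (\<lambda>i. f q (s i)) \<longlonglongrightarrow> l"
  proof
    fix q and s :: "nat \<Rightarrow> nat"
    have "bounded (range (\<lambda>i. f q (s i)))" using bounded[of q] by (rule bounded_subset) auto
    then obtain l r where "l \<in> S q" "strict_mono r" "((\<lambda>i. f q (s i)) \<circ> r) \<longlonglongrightarrow> l"
      using boundedly_compactD[OF S[of q], of "\<lambda>i. f q (s i)"] f by blast
    then show "\<exists>r. strict_mono r \<and> (\<exists>l\<in>S q. (\<lambda>i. f q ((s \<circ> r) i)) \<longlonglongrightarrow> l)"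
      by (auto simp: o_def)
  qed
  have "\<exists>l\<in>S q. (\<lambda>i. f q (diagseq i)) \<longlonglongrightarrow> l" for q
  proof -
    have "\<exists>l\<in>S q. (\<lambda>i. f q ((diagseq \<circ> (+) (Suc q)) i)) \<longlonglongrightarrow> l"
    proof (rule diagseq_holds)
      fix r s n assume "strict_mono (r :: nat \<Rightarrow> nat)" "\<exists>l\<in>S n. (\<lambda>i. f n (s i)) \<longlonglongrightarrow> l"
      then show "\<exists>l\<in>S n. (\<lambda>i. f n ((s \<circ> r) i)) \<longlonglongrightarrow> l"
        using LIMSEQ_subseq_LIMSEQ[of "\<lambda>i. f n (s i)" _ r] by (auto simp: o_def)
    qed
    moreover have "(\<lambda>i. f q ((diagseq \<circ> (+) (Suc q)) i)) = (\<lambda>i. f q (diagseq (i + Suc q)))"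
      by (simp add: o_def add.commute)
    ultimately show ?thesis using LIMSEQ_offset[of "\<lambda>i. f q (diagseq i)" "Suc q"] by auto
  qed
  then show ?thesis using that subseq_diagseq by blast
qed

section \<open>Finite dimensional decompositions\<close>

lemma norm_sum_scaleR_le_max_signs:
  fixes x :: "nat \<Rightarrow> 'a::real_normed_vector"
  assumes "\<bar>c k\<bar> \<le> 1"
  shows "norm (\<Sum>i<n. c i *\<^sub>R x i)
    \<le> max (norm (\<Sum>i<n. (c(k := 1)) i *\<^sub>R x i)) (norm (\<Sum>i<n. (c(k := - 1)) i *\<^sub>R x i))"
proof -
  define l where "l = (1 + c k) / 2"
  define a where "a = c(k := 1)"
  define b where "b = c(k := - 1)"
  have l: "0 \<le> l" "0 \<le> 1 - l" using assms by (auto simp: l_def abs_le_iff)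
  have c: "c i = l * a i + (1 - l) * b i" for i
    by (cases "i = k") (simp_all add: l_def a_def b_def field_simps)
  have "(\<Sum>i<n. c i *\<^sub>R x i) = (\<Sum>i<n. l *\<^sub>R (a i *\<^sub>R x i) + (1 - l) *\<^sub>R (b i *\<^sub>R x i))"
    by (intro sum.cong refl) (simp only: c scaleR_add_left scaleR_scaleR)
  also have "\<dots> = l *\<^sub>R (\<Sum>i<n. a i *\<^sub>R x i) + (1 - l) *\<^sub>R (\<Sum>i<n. b i *\<^sub>R x i)"
    by (simp only: sum.distrib scaleR_sum_right)
  finally have "norm (\<Sum>i<n. c i *\<^sub>R x i)
      \<le> l * norm (\<Sum>i<n. a i *\<^sub>R x i) + (1 - l) * norm (\<Sum>i<n. b i *\<^sub>R x i)"
    using norm_triangle_ineq[of "l *\<^sub>R (\<Sum>i<n. a i *\<^sub>R x i)" "(1 - l) *\<^sub>R (\<Sum>i<n. b i *\<^sub>R x i)"] l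
    by simp
  also have "\<dots> \<le> max (norm (\<Sum>i<n. a i *\<^sub>R x i)) (norm (\<Sum>i<n. b i *\<^sub>R x i))"
    using l by (intro convex_bound_le) auto
  finally show ?thesis unfolding a_def b_def .
qed

locale fin_dim_decomp =
  fixes E :: "nat \<Rightarrow> 'a::real_normed_vector set"
  assumes fdd: "is_fdd E"
begin

lemma subspace_component: "subspace (E n)"
  using fdd unfolding is_fdd_def fin_dim_subspace_def by blast

lemma finite_spanning_component: "\<exists>B. finite B \<and> E n = span B"
  using fdd unfolding is_fdd_def fin_dim_subspace_def by blast

lemma countable_spanning_set:
  obtains V where "countable V" and "\<And>j. E j \<subseteq> span V"
proof -
  obtain B where B: "\<And>j. finite (B j) \<and> E j = span (B j)"
    using finite_spanning_component by metis
  then have "E j \<subseteq> span (\<Union>j. B j)" for j by (metis UN_upper UNIV_I span_mono)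
  moreover have "countable (\<Union>j. B j)" using B by (simp add: countable_finite)
  ultimately show ?thesis using that by blast
qed

lemma unique_expansion: "\<exists>!u. (\<forall>n. u n \<in> E n) \<and> u sums x"
  using fdd unfolding is_fdd_def by blast

lemma fdd_proj_expansion: "(\<forall>n. fdd_proj E n x \<in> E n) \<and> (\<lambda>n. fdd_proj E n x) sums x"
  using theI'[OF unique_expansion[of x]] unfolding fdd_proj_def by simp

lemma fdd_proj_in: "fdd_proj E n x \<in> E n"
  using fdd_proj_expansion by blast

lemma fdd_proj_sums: "(\<lambda>n. fdd_proj E n x) sums x"
  using fdd_proj_expansion by blast

lemma fdd_proj_unique:
  assumes "\<And>n. u n \<in> E n" and "u sums x"
  shows "fdd_proj E n x = u n"
proof -
  have "(THE u. (\<forall>k. u k \<in> E k) \<and> u sums x) = u"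
    using assms unique_expansion[of x] by (intro the1_equality) auto
  then show ?thesis unfolding fdd_proj_def by simp
qed

lemma fdd_proj_sum_components:
  assumes "\<And>i. i < N \<Longrightarrow> x i \<in> E i"
  shows "fdd_proj E j (\<Sum>i<N. x i) = (if j < N then x j else 0)"
proof -
  have "(\<lambda>i. if i \<in> {..<N} then x i else 0) sums (\<Sum>i\<in>{..<N}. x i)"
    by (rule sums_If_finite_set) simp
  then show ?thesis
    using assms subspace_0[OF subspace_component] by (subst fdd_proj_unique) auto
qed

definition fdd_partial_sum :: "nat \<Rightarrow> 'a \<Rightarrow> 'a" where
  "fdd_partial_sum N x = (\<Sum>j<N. fdd_proj E j x)"

lemma fdd_partial_sum_tendsto: "(\<lambda>N. fdd_partial_sum N x) \<longlonglongrightarrow> x"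
  using fdd_proj_sums[of x] unfolding sums_def fdd_partial_sum_def .

lemma fdd_proj_partial_sum:
  "fdd_proj E n (fdd_partial_sum N x) = (if n < N then fdd_proj E n x else 0)"
  unfolding fdd_partial_sum_def by (rule fdd_proj_sum_components) (rule fdd_proj_in)

lemma shrinking_partial_sum_approx:
  assumes shrinking: "is_fdd (fdd_dual E)" and "bounded_linear g"
  obtains \<epsilon> where "\<epsilon> \<longlonglongrightarrow> 0" and "\<And>N x. \<bar>g x - g (fdd_partial_sum N x)\<bar> \<le> \<epsilon> N * norm x"
proof -
  define G where "G = Blinfun g"
  have G: "blinfun_apply G = g" unfolding G_def using bounded_linear_Blinfun_apply[OF assms(2)] .
  obtain h where h_dual: "\<And>n. h n \<in> fdd_dual E n" and "h sums G"
    using shrinking unfolding is_fdd_def by blast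
  define \<epsilon> where "\<epsilon> N = norm (G - (\<Sum>n<N. h n))" for N
  have "(\<lambda>N. G - (\<Sum>n<N. h n)) \<longlonglongrightarrow> G - G"
    using \<open>h sums G\<close> unfolding sums_def by (intro tendsto_diff) auto
  then have "\<epsilon> \<longlonglongrightarrow> 0" unfolding \<epsilon>_def using tendsto_norm_zero by fastforce
  moreover have "\<bar>g x - g (fdd_partial_sum N x)\<bar> \<le> \<epsilon> N * norm x" for N x
  proof -
    have h: "blinfun_apply (h n) y = blinfun_apply (h n) (fdd_proj E n y)" for n y
      using h_dual[of n] unfolding fdd_dual_def by blast
    have "(\<lambda>n. blinfun_apply (h n) y) sums g y" for y
      using bounded_linear.sums[OF blinfun.bounded_linear_left \<open>h sums G\<close>] G by simp
    moreover have "blinfun_apply (h n) (fdd_partial_sum N x)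
        = (if n \<in> {..<N} then blinfun_apply (h n) x else 0)" for n
      using h[of n "fdd_partial_sum N x"] h[of n x] by (simp add: fdd_proj_partial_sum)
    then have "(\<lambda>n. blinfun_apply (h n) (fdd_partial_sum N x)) sums (\<Sum>n<N. blinfun_apply (h n) x)"
      by (simp only:) (rule sums_If_finite_set, simp)
    ultimately have "g (fdd_partial_sum N x) = (\<Sum>n<N. blinfun_apply (h n) x)"
      using sums_unique2 by blast
    then have "g x - g (fdd_partial_sum N x) = blinfun_apply (G - (\<Sum>n<N. h n)) x"
      by (simp add: G blinfun.diff_left blinfun.sum_left)
    then show ?thesis unfolding \<epsilon>_def using norm_blinfun by (metis real_norm_def)
  qed
  ultimately show ?thesis using that by blast
qed

lemma tendsto_functional_sum_coordinate_limits:
  fixes w :: "nat \<Rightarrow> 'a" and g :: "'a \<Rightarrow> real"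
  assumes shrinking: "is_fdd (fdd_dual E)" and g: "bounded_linear g"
    and bound: "\<And>M. norm (w M) \<le> B"
    and coord: "\<And>j. (\<lambda>M. fdd_proj E j (w M)) \<longlonglongrightarrow> \<omega> j"
    and lim: "(\<lambda>M. g (w M)) \<longlonglongrightarrow> L"
  shows "(\<lambda>N. g (\<Sum>j<N. \<omega> j)) \<longlonglongrightarrow> L"
proof -
  obtain \<epsilon> where "\<epsilon> \<longlonglongrightarrow> 0" and \<epsilon>: "\<And>N x. \<bar>g x - g (fdd_partial_sum N x)\<bar> \<le> \<epsilon> N * norm x"
    using shrinking_partial_sum_approx[OF shrinking g] by blast
  have error: "\<bar>g (\<Sum>j<N. \<omega> j) - L\<bar> \<le> \<bar>\<epsilon> N\<bar> * B" for N
  proof (rule LIMSEQ_le_const2)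
    show "(\<lambda>M. \<bar>g (fdd_partial_sum N (w M)) - g (w M)\<bar>) \<longlonglongrightarrow> \<bar>g (\<Sum>j<N. \<omega> j) - L\<bar>"
      unfolding fdd_partial_sum_def by (intro tendsto_intros bounded_linear.tendsto[OF g] coord lim)
    have "\<bar>g (fdd_partial_sum N (w M)) - g (w M)\<bar> \<le> \<bar>\<epsilon> N\<bar> * B" for M
    proof -
      have "\<bar>g (fdd_partial_sum N (w M)) - g (w M)\<bar> \<le> \<epsilon> N * norm (w M)"
        using \<epsilon>[of "w M" N] by linarith
      also have "\<dots> \<le> \<bar>\<epsilon> N\<bar> * B" using bound[of M] by (intro mult_mono) auto
      finally show ?thesis .
    qed
    then show "\<exists>M0. \<forall>M\<ge>M0. \<bar>g (fdd_partial_sum N (w M)) - g (w M)\<bar> \<le> \<bar>\<epsilon> N\<bar> * B" by blast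
  qed
  have "(\<lambda>N. g (\<Sum>j<N. \<omega> j) - L) \<longlonglongrightarrow> 0"
  proof (rule Lim_null_comparison)
    show "\<forall>\<^sub>F N in sequentially. norm (g (\<Sum>j<N. \<omega> j) - L) \<le> \<bar>\<epsilon> N\<bar> * B"
      using error by simp
    show "(\<lambda>N. \<bar>\<epsilon> N\<bar> * B) \<longlonglongrightarrow> 0"
      using tendsto_mult_left_zero[OF tendsto_rabs_zero[OF \<open>\<epsilon> \<longlonglongrightarrow> 0\<close>]] by simp
  qed
  then show ?thesis by (simp add: LIM_zero_iff)
qed

end


lemma sum_consecutive_blocks:
  fixes p :: "nat \<Rightarrow> nat"
  assumes "mono p"
  shows "(\<Sum>l<n. \<Sum>j\<in>{p l..<p (Suc l)}. f j) = (\<Sum>j\<in>{p 0..<p n}. f j)"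
proof (induction n)
  case (Suc n)
  have "p 0 \<le> p n" "p n \<le> p (Suc n)" using assms by (simp_all add: monoD)
  then show ?case using Suc sum.atLeastLessThan_concat[of "p 0" "p n" "p (Suc n)" f] by simp
qed simp

lemma strict_mono_block_unique:
  fixes p :: "nat \<Rightarrow> nat"
  assumes p: "strict_mono p" and "p l \<le> j" "j < p (Suc l)" "p l' \<le> j" "j < p (Suc l')"
  shows "l = l'"
proof (rule ccontr)
  assume "l \<noteq> l'"
  then consider "Suc l \<le> l'" | "Suc l' \<le> l" by linarith
  then show False
  proof cases
    case 1
    then have "p (Suc l) \<le> p l'" by (simp add: strict_mono_less_eq[OF p])
    then show False using assms by linarith
  next
    case 2
    then have "p (Suc l') \<le> p l" by (simp add: strict_mono_less_eq[OF p])
    then show False using assms by linarith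
  qed
qed

lemma strict_mono_block_exists:
  fixes p :: "nat \<Rightarrow> nat"
  assumes "strict_mono p" "p 0 \<le> j" "j < p n"
  shows "\<exists>l<n. p l \<le> j \<and> j < p (Suc l)"
  using assms(3)
proof (induction n)
  case 0
  then show ?case using assms(2) by simp
next
  case (Suc n)
  then show ?case by (cases "j < p n") (auto simp: not_less intro: less_SucI)
qed

locale unconditional_fin_dim_decomp = fin_dim_decomp E for E :: "nat \<Rightarrow> 'a::real_normed_vector set" +
  fixes K :: real
  assumes unconditional: "unconditional_fdd K E"
begin

lemma norm_sum_signs_le:
  assumes "\<And>i. x i \<in> E i" and "\<And>i. s i = 1 \<or> s i = - 1"
  shows "norm (\<Sum>i<n. s i *\<^sub>R x i) \<le> K * norm (\<Sum>i<n. x i)"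
  using unconditional assms unfolding unconditional_fdd_def by blast

lemma norm_sum_multipliers_le:
  assumes x: "\<And>i. x i \<in> E i" and c: "\<And>i. i < n \<Longrightarrow> \<bar>c i\<bar> \<le> 1"
  shows "norm (\<Sum>i<n. c i *\<^sub>R x i) \<le> K * norm (\<Sum>i<n. x i)"
proof -
  have "norm (\<Sum>i<n. c i *\<^sub>R x i) \<le> K * norm (\<Sum>i<n. x i)"
    if "\<forall>i. \<bar>c i\<bar> \<le> 1" "\<forall>i\<ge>k. c i = 1 \<or> c i = - 1" for k and c :: "nat \<Rightarrow> real"
    using that
  proof (induction k arbitrary: c)
    case 0
    then show ?case using norm_sum_signs_le[OF x] by blast
  next
    case (Suc k)
    have sign: "norm (\<Sum>i<n. (c(k := s)) i *\<^sub>R x i) \<le> K * norm (\<Sum>i<n. x i)"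
      if "s = 1 \<or> s = - 1" for s
      using Suc.prems that by (intro Suc.IH) (auto simp: not_less_eq_eq)
    have "\<bar>c k\<bar> \<le> 1" using Suc.prems by blast
    then have "norm (\<Sum>i<n. c i *\<^sub>R x i)
        \<le> max (norm (\<Sum>i<n. (c(k := 1)) i *\<^sub>R x i)) (norm (\<Sum>i<n. (c(k := - 1)) i *\<^sub>R x i))"
      by (rule norm_sum_scaleR_le_max_signs)
    also have "\<dots> \<le> K * norm (\<Sum>i<n. x i)"
      using sign[of 1] sign[of "- 1"] by simp
    finally show ?case .
  qed
  from this[of "\<lambda>i. if i < n then c i else 1" n] have
    "norm (\<Sum>i<n. (if i < n then c i else 1) *\<^sub>R x i) \<le> K * norm (\<Sum>i<n. x i)"
    using c by (simp add: not_less)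
  then show ?thesis by simp
qed

lemma norm_sum_bounded_multipliers_le:
  assumes x: "\<And>i. x i \<in> E i" and c: "\<And>i. i < n \<Longrightarrow> \<bar>c i\<bar> \<le> Mx"
  shows "norm (\<Sum>i<n. c i *\<^sub>R x i) \<le> Mx * K * norm (\<Sum>i<n. x i)"
proof (cases "Mx > 0")
  case True
  have "norm (\<Sum>i<n. (c i / Mx) *\<^sub>R x i) \<le> K * norm (\<Sum>i<n. x i)"
    using c True by (intro norm_sum_multipliers_le[OF x]) (simp add: abs_divide)
  moreover have "(\<Sum>i<n. (c i / Mx) *\<^sub>R x i) = (1 / Mx) *\<^sub>R (\<Sum>i<n. c i *\<^sub>R x i)"
    by (simp add: scaleR_sum_right)
  ultimately show ?thesis using True by (simp add: field_simps)
next
  case False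
  show ?thesis
  proof (cases "n = 0")
    case False
    then have "Mx = 0" using c[of 0] \<open>\<not> Mx > 0\<close> by simp
    then show ?thesis using c by simp
  qed simp
qed

lemma norm_fdd_partial_multipliers_le:
  assumes c: "\<And>i. i < N \<Longrightarrow> \<bar>c i\<bar> \<le> 1"
  shows "norm (\<Sum>i<N. c i *\<^sub>R fdd_proj E i x) \<le> K * norm x"
proof (rule LIMSEQ_le_const)
  show "(\<lambda>n. K * norm (fdd_partial_sum n x)) \<longlonglongrightarrow> K * norm x"
    by (intro tendsto_intros fdd_partial_sum_tendsto)
  define c' where "c' i = (if i < N then c i else 0)" for i
  have "norm (\<Sum>i<N. c i *\<^sub>R fdd_proj E i x) \<le> K * norm (fdd_partial_sum n x)" if "N \<le> n" for n
  proof -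
    have "(\<Sum>i<n. c' i *\<^sub>R fdd_proj E i x)
        = (\<Sum>i<n. if i \<in> {..<N} then c i *\<^sub>R fdd_proj E i x else 0)"
      by (intro sum.cong) (auto simp: c'_def)
    also have "\<dots> = (\<Sum>i\<in>{..<n} \<inter> {..<N}. c i *\<^sub>R fdd_proj E i x)"
      by (simp add: sum.inter_restrict)
    also have "{..<n} \<inter> {..<N} = {..<N}" using that by auto
    finally have "(\<Sum>i<n. c' i *\<^sub>R fdd_proj E i x) = (\<Sum>i<N. c i *\<^sub>R fdd_proj E i x)" .
    moreover have "\<bar>c' i\<bar> \<le> 1" for i using c by (simp add: c'_def)
    ultimately show ?thesis unfolding fdd_partial_sum_def
      using norm_sum_multipliers_le[where x = "\<lambda>i. fdd_proj E i x" and n = n and c = c']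
      by (simp add: fdd_proj_in)
  qed
  then show "\<exists>N'. \<forall>n\<ge>N'. norm (\<Sum>i<N. c i *\<^sub>R fdd_proj E i x) \<le> K * norm (fdd_partial_sum n x)"
    by blast
qed

lemma norm_fdd_partial_sum_le: "norm (fdd_partial_sum N x) \<le> K * norm x"
  using norm_fdd_partial_multipliers_le[of N "\<lambda>_. 1" x] by (simp add: fdd_partial_sum_def)

lemma norm_fdd_proj_le: "norm (fdd_proj E n x) \<le> K * norm x"
  using norm_fdd_partial_multipliers_le[of "Suc n" "\<lambda>i. if i = n then 1 else 0" x]
  by (simp add: if_distrib cong: if_cong)

lemma norm_block_combination_le:
  assumes \<omega>: "\<And>j. \<omega> j \<in> E j" and p: "strict_mono p" "p 0 = 0"
    and c: "\<And>l. l < n \<Longrightarrow> \<bar>c l\<bar> \<le> Mx"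
  shows "norm (\<Sum>l<n. c l *\<^sub>R (\<Sum>j\<in>{p l..<p (Suc l)}. \<omega> j)) \<le> Mx * K * norm (\<Sum>j<p n. \<omega> j)"
proof -
  define block where "block j = (THE l. p l \<le> j \<and> j < p (Suc l))" for j
  have block: "block j = l" if "p l \<le> j" "j < p (Suc l)" for j l
    unfolding block_def using that strict_mono_block_unique[OF p(1)] by blast
  have "(\<Sum>l<n. c l *\<^sub>R (\<Sum>j\<in>{p l..<p (Suc l)}. \<omega> j))
      = (\<Sum>l<n. \<Sum>j\<in>{p l..<p (Suc l)}. c (block j) *\<^sub>R \<omega> j)"
    unfolding scaleR_sum_right
  proof (intro sum.cong refl)
    fix l j assume "j \<in> {p l..<p (Suc l)}"
    then show "c l *\<^sub>R \<omega> j = c (block j) *\<^sub>R \<omega> j" using block[of l j] by simp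
  qed
  also have "\<dots> = (\<Sum>j<p n. c (block j) *\<^sub>R \<omega> j)"
    using sum_consecutive_blocks[OF strict_mono_mono[OF p(1)]] p(2) by (simp add: atLeast0LessThan)
  finally have eq: "(\<Sum>l<n. c l *\<^sub>R (\<Sum>j\<in>{p l..<p (Suc l)}. \<omega> j)) = (\<Sum>j<p n. c (block j) *\<^sub>R \<omega> j)" .
  have "\<bar>c (block j)\<bar> \<le> Mx" if "j < p n" for j
    using strict_mono_block_exists[OF p(1), of j n] that p(2) block c by auto
  then show ?thesis unfolding eq by (rule norm_sum_bounded_multipliers_le[OF \<omega>])
qed

lemma coordinatewise_convergent_subsequence:
  fixes w :: "nat \<Rightarrow> 'a"
  assumes "\<And>M. norm (w M) \<le> B"
  obtains \<sigma> :: "nat \<Rightarrow> nat" and \<omega> where "strict_mono \<sigma>" and "\<And>j. \<omega> j \<in> E j"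
    and "\<And>j. (\<lambda>M. fdd_proj E j (w (\<sigma> M))) \<longlonglongrightarrow> \<omega> j"
proof -
  have "boundedly_compact (E j)" for j
    using finite_spanning_component boundedly_compact_span by metis
  moreover have "bounded (range (\<lambda>M. fdd_proj E j (w M)))" for j
  proof (rule boundedI)
    fix z assume "z \<in> range (\<lambda>M. fdd_proj E j (w M))"
    then obtain M where "z = fdd_proj E j (w M)" by blast
    then have "norm z \<le> K * norm (w M)" using norm_fdd_proj_le by simp
    also have "\<dots> \<le> \<bar>K\<bar> * B" using assms[of M] by (intro mult_mono) auto
    finally show "norm z \<le> \<bar>K\<bar> * B" .
  qed
  ultimately obtain \<sigma> where "strict_mono \<sigma>" and "\<And>j. \<exists>\<omega>\<in>E j. (\<lambda>M. fdd_proj E j (w (\<sigma> M))) \<longlonglongrightarrow> \<omega>"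
    using diagonal_convergent_subsequence[of E "\<lambda>j M. fdd_proj E j (w M)"] fdd_proj_in by blast
  then show ?thesis using that by metis
qed

lemma norm_sum_coordinate_limits_le:
  fixes w :: "nat \<Rightarrow> 'a"
  assumes bound: "\<And>M. norm (w M) \<le> B"
    and coord: "\<And>j. (\<lambda>M. fdd_proj E j (w M)) \<longlonglongrightarrow> \<omega> j"
  shows "norm (\<Sum>j<N. \<omega> j) \<le> \<bar>K\<bar> * B"
proof (rule LIMSEQ_le_const2)
  show "(\<lambda>M. norm (fdd_partial_sum N (w M))) \<longlonglongrightarrow> norm (\<Sum>j<N. \<omega> j)"
    unfolding fdd_partial_sum_def by (intro tendsto_intros coord)
  have "norm (fdd_partial_sum N (w M)) \<le> \<bar>K\<bar> * B" for M
    using norm_fdd_partial_sum_le[of N "w M"] mult_mono[OF abs_ge_self bound[of M], of K]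
    by simp
  then show "\<exists>M0. \<forall>M\<ge>M0. norm (fdd_partial_sum N (w M)) \<le> \<bar>K\<bar> * B" by blast
qed

end

section \<open>The sequence space c_0 and its isomorphic copies\<close>

lemma c0_add: "a \<in> c0 \<Longrightarrow> b \<in> c0 \<Longrightarrow> (\<lambda>n. a n + b n) \<in> c0"
  unfolding c0_def using tendsto_add by fastforce

lemma c0_scale: "a \<in> c0 \<Longrightarrow> (\<lambda>n. c * a n) \<in> c0"
  unfolding c0_def using tendsto_mult_right_zero by fastforce

lemma c0_eventually_zero:
  assumes "\<And>n. n \<ge> N \<Longrightarrow> a n = 0"
  shows "a \<in> c0"
proof -
  have "eventually (\<lambda>n. a n = 0) sequentially"
    using assms by (auto simp: eventually_sequentially)
  then show ?thesis unfolding c0_def by (simp add: tendsto_eventually)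
qed

lemma bdd_above_abs_c0:
  assumes "a \<in> c0"
  shows "bdd_above (range (\<lambda>n. \<bar>a n\<bar>))"
proof -
  have "Bseq a" using assms unfolding c0_def by (blast intro: convergent_imp_Bseq convergentI)
  then obtain B where "\<And>n. norm (a n) \<le> B" using BseqE by metis
  then show ?thesis by (auto intro!: bdd_aboveI)
qed

lemma abs_le_sup_norm: "a \<in> c0 \<Longrightarrow> \<bar>a k\<bar> \<le> sup_norm a"
  unfolding sup_norm_def by (rule cSUP_upper[OF _ bdd_above_abs_c0]) auto

lemma sup_norm_le: "(\<And>k. \<bar>a k\<bar> \<le> C) \<Longrightarrow> sup_norm a \<le> C"
  unfolding sup_norm_def by (rule cSUP_least) auto

lemma sup_norm_nonneg: "a \<in> c0 \<Longrightarrow> 0 \<le> sup_norm a"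
  using abs_le_sup_norm[of a 0] by linarith

lemma c0_embeddingE:
  assumes "c0_embedding J"
  obtains m M where "0 < m" and "\<And>a. a \<in> c0 \<Longrightarrow> m * sup_norm a \<le> norm (J a)"
    and "\<And>a. a \<in> c0 \<Longrightarrow> norm (J a) \<le> M * sup_norm a"
  using assms unfolding c0_embedding_def by blast

lemma c0_embedding_add:
  "c0_embedding J \<Longrightarrow> a \<in> c0 \<Longrightarrow> b \<in> c0 \<Longrightarrow> J (\<lambda>n. a n + b n) = J a + J b"
  unfolding c0_embedding_def by blast

lemma c0_embedding_scale: "c0_embedding J \<Longrightarrow> a \<in> c0 \<Longrightarrow> J (\<lambda>n. c * a n) = c *\<^sub>R J a"
  unfolding c0_embedding_def by blast

lemma c0_embedding_compose:
  assumes J: "c0_embedding J" and T: "bounded_linear T"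
    and "m > 0" and fixed: "\<And>z. z \<in> J ` c0 \<Longrightarrow> m * norm z \<le> norm (T z)"
  shows "c0_embedding (\<lambda>a. T (J a))"
proof -
  interpret T: bounded_linear T by (rule T)
  obtain mJ MJ where "0 < mJ" and lower: "\<And>a. a \<in> c0 \<Longrightarrow> mJ * sup_norm a \<le> norm (J a)"
    and upper: "\<And>a. a \<in> c0 \<Longrightarrow> norm (J a) \<le> MJ * sup_norm a"
    using c0_embeddingE[OF J] by blast
  obtain nT where "nT > 0" and nT: "\<And>x. norm (T x) \<le> norm x * nT"
    using T.pos_bounded by blast
  have "m * mJ * sup_norm a \<le> norm (T (J a)) \<and> norm (T (J a)) \<le> nT * MJ * sup_norm a"
    if "a \<in> c0" for a
  proof
    have "m * (mJ * sup_norm a) \<le> m * norm (J a)"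
      using lower[OF that] \<open>m > 0\<close> by (intro mult_left_mono) auto
    then show "m * mJ * sup_norm a \<le> norm (T (J a))"
      using order_trans fixed[of "J a"] that by (fastforce simp: mult.assoc)
    show "norm (T (J a)) \<le> nT * MJ * sup_norm a"
    proof -
      have "norm (T (J a)) \<le> nT * norm (J a)" using nT[of "J a"] by (simp add: mult.commute)
      also have "\<dots> \<le> nT * (MJ * sup_norm a)"
        using upper[OF that] \<open>nT > 0\<close> by (intro mult_left_mono) auto
      finally show ?thesis by (simp add: mult.assoc)
    qed
  qed
  moreover have "0 < m * mJ" using \<open>m > 0\<close> \<open>0 < mJ\<close> by simp
  ultimately show ?thesis
    using c0_embedding_add[OF J] c0_embedding_scale[OF J]
    unfolding c0_embedding_def by (auto simp: T.add T.scaleR)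
qed

lemma inj_on_c0_embedding:
  assumes J: "c0_embedding J"
  shows "inj_on J c0"
proof (rule inj_onI)
  fix a b assume a: "a \<in> c0" and b: "b \<in> c0" and "J a = J b"
  obtain m where "0 < m" and lower: "\<And>a. a \<in> c0 \<Longrightarrow> m * sup_norm a \<le> norm (J a)"
    using c0_embeddingE[OF J] by metis
  have d: "(\<lambda>n. a n + (- 1) * b n) \<in> c0" using c0_add[OF a c0_scale[OF b]] .
  have "J (\<lambda>n. a n + (- 1) * b n) = 0"
    using c0_embedding_add[OF J a c0_scale[OF b, of "- 1"]] c0_embedding_scale[OF J b, of "- 1"] \<open>J a = J b\<close>
    by simp
  then have "sup_norm (\<lambda>n. a n + (- 1) * b n) \<le> 0"
    using lower[OF d] \<open>0 < m\<close> by (simp add: mult_le_0_iff)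
  then have "\<bar>a k - b k\<bar> \<le> 0" for k using abs_le_sup_norm[OF d, of k] by simp
  then show "a = b" by (simp add: fun_eq_iff)
qed

lemma subspace_c0_embedding_image:
  assumes J: "c0_embedding J"
  shows "subspace (J ` c0)"
  unfolding subspace_def
proof (intro conjI ballI allI)
  have "(\<lambda>n. 0) \<in> c0" by (rule c0_eventually_zero) simp
  moreover from this have "J (\<lambda>n. 0) = 0" using c0_embedding_scale[OF J, of "\<lambda>n. 0" 0] by simp
  ultimately show "0 \<in> J ` c0" by (metis rev_image_eqI)
next
  fix x y assume "x \<in> J ` c0" "y \<in> J ` c0"
  then obtain a b where "a \<in> c0" "b \<in> c0" "x = J a" "y = J b" by blast
  then have "x + y = J (\<lambda>n. a n + b n)" using c0_embedding_add[OF J] by simp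
  then show "x + y \<in> J ` c0" using c0_add[OF \<open>a \<in> c0\<close> \<open>b \<in> c0\<close>] by blast
next
  fix c x assume "x \<in> J ` c0"
  then obtain a where "a \<in> c0" "x = J a" by blast
  then have "c *\<^sub>R x = J (\<lambda>n. c * a n)" using c0_embedding_scale[OF J] by simp
  then show "c *\<^sub>R x \<in> J ` c0" using c0_scale[OF \<open>a \<in> c0\<close>] by blast
qed

lemma c0_embedding_coordinate_functionals:
  fixes J :: "(nat \<Rightarrow> real) \<Rightarrow> 'a::real_normed_vector"
  assumes J: "c0_embedding J"
  obtains \<phi> c where "c > 0" and "\<And>k. bounded_linear (\<phi> k)"
    and "\<And>k a. a \<in> c0 \<Longrightarrow> \<phi> k (J a) = a k" and "\<And>k y. \<bar>\<phi> k y\<bar> \<le> c * norm y"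
proof -
  obtain m where "0 < m" and lower: "\<And>a. a \<in> c0 \<Longrightarrow> m * sup_norm a \<le> norm (J a)"
    using c0_embeddingE[OF J] by metis
  have "\<exists>\<phi>. bounded_linear \<phi> \<and> (\<forall>a\<in>c0. \<phi> (J a) = a k) \<and> (\<forall>y. \<bar>\<phi> y\<bar> \<le> (1 / m) * norm y)" for k
  proof -
    define f where "f y = inv_into c0 J y k" for y
    have f: "f (J a) = a k" if "a \<in> c0" for a
      unfolding f_def using inv_into_f_f[OF inj_on_c0_embedding[OF J] that] by simp
    have "\<exists>g. bounded_linear g \<and> (\<forall>x\<in>J ` c0. g x = f x) \<and> (\<forall>x. \<bar>g x\<bar> \<le> (1 / m) * norm x)"
    proof (rule hahn_banach_dominated[OF subspace_c0_embedding_image[OF J]])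
      fix x y assume "x \<in> J ` c0" "y \<in> J ` c0"
      then obtain a b where ab: "a \<in> c0" "b \<in> c0" "x = J a" "y = J b" by blast
      then have "f (x + y) = f (J (\<lambda>n. a n + b n))" using c0_embedding_add[OF J] by simp
      then show "f (x + y) = f x + f y" using f ab c0_add by simp
    next
      fix x c assume "x \<in> J ` c0"
      then obtain a where a: "a \<in> c0" "x = J a" by blast
      then have "f (c *\<^sub>R x) = f (J (\<lambda>n. c * a n))" using c0_embedding_scale[OF J] by simp
      then show "f (c *\<^sub>R x) = c * f x" using f a c0_scale by simp
    next
      fix x assume "x \<in> J ` c0"
      then obtain a where a: "a \<in> c0" "x = J a" by blast
      have "m * \<bar>a k\<bar> \<le> m * sup_norm a"
        using abs_le_sup_norm[OF a(1), of k] \<open>0 < m\<close> by simp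
      then have "m * \<bar>a k\<bar> \<le> norm (J a)" using lower[OF a(1)] by linarith
      then have "\<bar>a k\<bar> \<le> (1 / m) * norm (J a)" using \<open>0 < m\<close> by (simp add: field_simps)
      then show "\<bar>f x\<bar> \<le> (1 / m) * norm x" using a f by simp
    qed (use \<open>0 < m\<close> in simp)
    then show ?thesis using f by auto
  qed
  then obtain \<phi> where "\<And>k. bounded_linear (\<phi> k)" "\<And>k a. a \<in> c0 \<Longrightarrow> \<phi> k (J a) = a k"
    "\<And>k y. \<bar>\<phi> k y\<bar> \<le> (1 / m) * norm y"
    by metis
  then show ?thesis using that[of "1 / m" \<phi>] \<open>0 < m\<close> by simp
qed

locale c0_block_estimates =
  fixes g :: "nat \<Rightarrow> 'a::banach" and T :: "'a \<Rightarrow> 'b::real_normed_vector" and C \<gamma> \<delta> :: real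
  assumes T: "bounded_linear T"
    and upper: "\<And>n c Mx. 0 \<le> Mx \<Longrightarrow> (\<And>l. l < n \<Longrightarrow> \<bar>c l\<bar> \<le> Mx) \<Longrightarrow>
      norm (\<Sum>l<n. c l *\<^sub>R g l) \<le> C * Mx"
    and lower: "\<And>n c Mx k. k < n \<Longrightarrow> (\<And>l. l < n \<Longrightarrow> \<bar>c l\<bar> \<le> Mx) \<Longrightarrow>
      \<gamma> * \<bar>c k\<bar> - \<delta> * Mx \<le> norm (T (\<Sum>l<n. c l *\<^sub>R g l))"
    and pos: "0 < \<gamma>" and gap: "\<delta> < \<gamma>"
begin

lemma upper_const_nonneg: "0 \<le> C"
  using upper[of 1 0 "\<lambda>_. 0"] by simp

lemma summable_c0_combination:
  assumes "x \<in> c0"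
  shows "summable (\<lambda>l. x l *\<^sub>R g l)"
  unfolding summable_Cauchy
proof (intro allI impI)
  fix e :: real assume "e > 0"
  define \<eta> where "\<eta> = e / (2 * (C + 1))"
  have "\<eta> > 0" using \<open>e > 0\<close> upper_const_nonneg by (simp add: \<eta>_def)
  moreover have "x \<longlonglongrightarrow> 0" using \<open>x \<in> c0\<close> unfolding c0_def by simp
  ultimately obtain N where "\<forall>l\<ge>N. norm (x l - 0) < \<eta>" unfolding LIMSEQ_iff by blast
  then have N: "\<And>l. l \<ge> N \<Longrightarrow> \<bar>x l\<bar> < \<eta>" by simp
  have "norm (\<Sum>l\<in>{m..<n}. x l *\<^sub>R g l) < e" if "N \<le> m" for m n
  proof -
    have "(\<Sum>l\<in>{m..<n}. x l *\<^sub>R g l) = (\<Sum>l\<in>{..<n} \<inter> {m..}. x l *\<^sub>R g l)"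
      by (intro sum.cong) auto
    also have "\<dots> = (\<Sum>l<n. (if m \<le> l then x l else 0) *\<^sub>R g l)"
      by (simp add: sum.inter_restrict) (intro sum.cong, auto)
    finally have "norm (\<Sum>l\<in>{m..<n}. x l *\<^sub>R g l) = norm (\<Sum>l<n. (if m \<le> l then x l else 0) *\<^sub>R g l)"
      by simp
    also have "\<dots> \<le> C * \<eta>"
      using N that \<open>\<eta> > 0\<close> by (intro upper) (auto simp: less_imp_le)
    also have "\<dots> < e"
      using \<open>e > 0\<close> upper_const_nonneg by (simp add: \<eta>_def field_simps add_nonneg_pos)
    finally show ?thesis .
  qed
  then show "\<exists>N. \<forall>m\<ge>N. \<forall>n. norm (\<Sum>l\<in>{m..<n}. x l *\<^sub>R g l) < e" by blast
qed

lemma norm_c0_combination_le: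
  assumes "x \<in> c0"
  shows "norm (\<Sum>l. x l *\<^sub>R g l) \<le> C * sup_norm x"
proof (rule LIMSEQ_le_const2)
  show "(\<lambda>n. norm (\<Sum>l<n. x l *\<^sub>R g l)) \<longlonglongrightarrow> norm (\<Sum>l. x l *\<^sub>R g l)"
    by (intro tendsto_norm summable_LIMSEQ summable_c0_combination assms)
  show "\<exists>N. \<forall>n\<ge>N. norm (\<Sum>l<n. x l *\<^sub>R g l) \<le> C * sup_norm x"
    using upper abs_le_sup_norm[OF assms] sup_norm_nonneg[OF assms] by blast
qed

lemma c0_combination_lower:
  assumes "x \<in> c0"
  shows "(\<gamma> - \<delta>) * sup_norm x \<le> norm (T (\<Sum>l. x l *\<^sub>R g l))"
proof -
  have "\<gamma> * \<bar>x k\<bar> - \<delta> * sup_norm x \<le> norm (T (\<Sum>l. x l *\<^sub>R g l))" for k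
  proof (rule LIMSEQ_le_const)
    show "(\<lambda>n. norm (T (\<Sum>l<n. x l *\<^sub>R g l))) \<longlonglongrightarrow> norm (T (\<Sum>l. x l *\<^sub>R g l))"
      by (intro tendsto_norm bounded_linear.tendsto[OF T] summable_LIMSEQ
          summable_c0_combination assms)
    have "\<gamma> * \<bar>x k\<bar> - \<delta> * sup_norm x \<le> norm (T (\<Sum>l<n. x l *\<^sub>R g l))" if "Suc k \<le> n" for n
      using that abs_le_sup_norm[OF assms] by (intro lower) auto
    then show "\<exists>N. \<forall>n\<ge>N. \<gamma> * \<bar>x k\<bar> - \<delta> * sup_norm x \<le> norm (T (\<Sum>l<n. x l *\<^sub>R g l))"
      by blast
  qed
  then have "\<gamma> * \<bar>x k\<bar> \<le> norm (T (\<Sum>l. x l *\<^sub>R g l)) + \<delta> * sup_norm x" for k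
    by (simp add: algebra_simps)
  then have "sup_norm x \<le> (norm (T (\<Sum>l. x l *\<^sub>R g l)) + \<delta> * sup_norm x) / \<gamma>"
    using pos by (intro sup_norm_le) (simp add: field_simps)
  then have "\<gamma> * sup_norm x \<le> norm (T (\<Sum>l. x l *\<^sub>R g l)) + \<delta> * sup_norm x"
    using pos by (simp add: field_simps)
  then show ?thesis by (simp add: algebra_simps)
qed


theorem fixes_copy_of_c0: "fixes_copy_of_c0 T"
proof -
  define J where "J x = (\<Sum>l. x l *\<^sub>R g l)" for x :: "nat \<Rightarrow> real"
  obtain nT where "nT > 0" and nT: "\<And>y. norm (T y) \<le> norm y * nT"
    using bounded_linear.pos_bounded[OF T] by blast
  have "c0_embedding J"
    unfolding c0_embedding_def
  proof (intro conjI ballI allI exI)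
    fix x y assume "x \<in> c0" "y \<in> c0"
    then show "J (\<lambda>n. x n + y n) = J x + J y"
      unfolding J_def
      by (simp add: scaleR_add_left suminf_add[OF summable_c0_combination summable_c0_combination])
  next
    fix c x assume "x \<in> c0"
    then show "J (\<lambda>n. c * x n) = c *\<^sub>R J x"
      unfolding J_def by (simp add: suminf_scaleR_right[OF summable_c0_combination])
  next
    show "0 < (\<gamma> - \<delta>) / nT" using gap \<open>nT > 0\<close> by simp
  next
    fix x assume "x \<in> c0"
    have "(\<gamma> - \<delta>) * sup_norm x \<le> norm (J x) * nT"
      using c0_combination_lower[OF \<open>x \<in> c0\<close>] nT[of "J x"] unfolding J_def by linarith
    then show "(\<gamma> - \<delta>) / nT * sup_norm x \<le> norm (J x)"
      using \<open>nT > 0\<close> by (simp add: field_simps)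
    show "norm (J x) \<le> C * sup_norm x"
      unfolding J_def by (rule norm_c0_combination_le[OF \<open>x \<in> c0\<close>])
  qed
  moreover have "(\<gamma> - \<delta>) / (C + 1) * norm z \<le> norm (T z)" if "z \<in> J ` c0" for z
  proof -
    obtain x where "x \<in> c0" and z: "z = J x" using \<open>z \<in> J ` c0\<close> by blast
    have "(\<gamma> - \<delta>) / (C + 1) * norm z \<le> (\<gamma> - \<delta>) / (C + 1) * (C * sup_norm x)"
      using norm_c0_combination_le[OF \<open>x \<in> c0\<close>] gap upper_const_nonneg
      unfolding z J_def by (intro mult_left_mono) auto
    also have "\<dots> \<le> (\<gamma> - \<delta>) * sup_norm x"
      using gap upper_const_nonneg sup_norm_nonneg[OF \<open>x \<in> c0\<close>]
      by (simp add: field_simps mult_right_mono)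
    also have "\<dots> \<le> norm (T z)"
      unfolding z J_def by (rule c0_combination_lower[OF \<open>x \<in> c0\<close>])
    finally show ?thesis .
  qed
  moreover have "(\<gamma> - \<delta>) / (C + 1) > 0" using gap upper_const_nonneg by simp
  ultimately show ?thesis unfolding fixes_copy_of_c0_def by blast
qed

end


section \<open>The gliding hump\<close>

lemma uniform_convergence_initial_segment:
  fixes a :: "nat \<Rightarrow> nat \<Rightarrow> real"
  assumes "\<And>N. (\<lambda>i. a i N) \<longlonglongrightarrow> L N" and "\<epsilon> > 0"
  obtains I where "\<And>i N. I \<le> i \<Longrightarrow> N \<le> Nmax \<Longrightarrow> \<bar>a i N - L N\<bar> \<le> \<epsilon>"
proof -
  have "\<forall>N\<in>{..Nmax}. eventually (\<lambda>i. dist (a i N) (L N) < \<epsilon>) sequentially"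
    using assms unfolding tendsto_iff by blast
  then have "eventually (\<lambda>i. \<forall>N\<in>{..Nmax}. dist (a i N) (L N) < \<epsilon>) sequentially"
    by (rule eventually_ball_finite[rotated]) simp
  then obtain I where I: "\<And>i. I \<le> i \<Longrightarrow> \<forall>N\<in>{..Nmax}. dist (a i N) (L N) < \<epsilon>"
    unfolding eventually_sequentially by blast
  have "\<bar>a i N - L N\<bar> \<le> \<epsilon>" if "I \<le> i" "N \<le> Nmax" for i N
    using bspec[OF I[OF that(1)], of N] that(2) by (simp add: dist_real_def)
  then show ?thesis by (rule that)
qed

lemma gliding_hump_blocks:
  fixes a :: "nat \<Rightarrow> nat \<Rightarrow> real" and \<eta> :: real
  assumes to_one: "\<And>i. (\<lambda>N. a i N) \<longlonglongrightarrow> 1" and to_zero: "\<And>N. (\<lambda>i. a i N) \<longlonglongrightarrow> 0"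
    and "\<eta> > 0"
  obtains p idx :: "nat \<Rightarrow> nat" where "p 0 = 0" and "strict_mono p"
    and "\<And>k N. N \<le> p k \<Longrightarrow> \<bar>a (idx k) N\<bar> \<le> \<eta> / (real k + 1)"
    and "\<And>k l N. k < l \<Longrightarrow> p l \<le> N \<Longrightarrow> \<bar>a (idx k) N - 1\<bar> \<le> \<eta> / 2 ^ l"
proof -
  have small: "\<exists>i\<ge>imin. \<forall>N\<le>Nmax. \<bar>a i N\<bar> \<le> \<epsilon>" if "\<epsilon> > 0" for Nmax imin \<epsilon>
  proof -
    obtain I where "\<And>i N. I \<le> i \<Longrightarrow> N \<le> Nmax \<Longrightarrow> \<bar>a i N - 0\<bar> \<le> \<epsilon>"
      by (rule uniform_convergence_initial_segment[where a = a and L = "\<lambda>_. 0",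
          OF to_zero \<open>\<epsilon> > 0\<close>]) blast
    then show ?thesis by (intro exI[of _ "max I imin"]) auto
  qed
  have near_one: "\<exists>p>pmin. \<forall>N\<ge>p. \<forall>i\<le>imin. \<bar>a i N - 1\<bar> \<le> \<epsilon>" if "\<epsilon> > 0" for pmin imin \<epsilon>
  proof -
    obtain P where "\<And>N i. P \<le> N \<Longrightarrow> i \<le> imin \<Longrightarrow> \<bar>a i N - 1\<bar> \<le> \<epsilon>"
      by (rule uniform_convergence_initial_segment[where a = "\<lambda>N i. a i N" and L = "\<lambda>_. 1",
          OF to_one \<open>\<epsilon> > 0\<close>]) blast
    then show ?thesis by (intro exI[of _ "max P (Suc pmin)"]) auto
  qed
  define P where "P n x \<longleftrightarrow> (n = 0 \<longrightarrow> fst x = 0) \<and> (\<forall>N\<le>fst x. \<bar>a (snd x) N\<bar> \<le> \<eta> / (real n + 1))"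
    for n and x :: "nat \<times> nat"
  define Q where "Q n x y \<longleftrightarrow> fst x < fst y \<and> snd x \<le> snd y \<and>
      (\<forall>N\<ge>fst y. \<forall>i\<le>snd x. \<bar>a i N - 1\<bar> \<le> \<eta> / 2 ^ Suc n)" for n and x y :: "nat \<times> nat"
  obtain imin where "\<forall>N\<le>0. \<bar>a imin N\<bar> \<le> \<eta>" using small[where Nmax = 0 and imin = 0 and \<epsilon> = \<eta>] \<open>\<eta> > 0\<close> by blast
  then have "\<exists>x. P 0 x" by (intro exI[of _ "(0, imin)"]) (simp add: P_def)
  moreover have "\<exists>y. P (Suc n) y \<and> Q n x y" if "P n x" for n x
  proof -
    obtain p' where p': "p' > fst x" "\<forall>N\<ge>p'. \<forall>i\<le>snd x. \<bar>a i N - 1\<bar> \<le> \<eta> / 2 ^ Suc n"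
      using near_one[where pmin = "fst x" and imin = "snd x" and \<epsilon> = "\<eta> / 2 ^ Suc n"] \<open>\<eta> > 0\<close>
      by auto
    obtain i' where i': "i' \<ge> snd x" "\<forall>N\<le>p'. \<bar>a i' N\<bar> \<le> \<eta> / (real (Suc n) + 1)"
      using small[where Nmax = p' and imin = "snd x" and \<epsilon> = "\<eta> / (real (Suc n) + 1)"] \<open>\<eta> > 0\<close>
      by auto
    show ?thesis using p' i' by (intro exI[of _ "(p', i')"]) (simp add: P_def Q_def)
  qed
  ultimately obtain f where f: "\<And>n. P n (f n) \<and> Q n (f n) (f (Suc n))"
    using dependent_nat_choice by metis
  define p where "p n = fst (f n)" for n
  define idx where "idx n = snd (f n)" for n
  have "p 0 = 0" using f[of 0] by (simp add: P_def p_def)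
  moreover have "strict_mono p" unfolding strict_mono_Suc_iff using f by (simp add: Q_def p_def)
  moreover have "\<bar>a (idx k) N\<bar> \<le> \<eta> / (real k + 1)" if "N \<le> p k" for k N
    using f[of k] that by (simp add: P_def p_def idx_def)
  moreover have "\<bar>a (idx k) N - 1\<bar> \<le> \<eta> / 2 ^ l" if "k < l" "p l \<le> N" for k l N
  proof -
    obtain l' where l: "l = Suc l'" using \<open>k < l\<close> by (cases l) auto
    have "incseq idx" using f by (intro incseq_SucI) (simp add: Q_def idx_def)
    then have "idx k \<le> idx l'" using \<open>k < l\<close> l by (simp add: incseq_def)
    then show ?thesis using f[of l'] that l by (simp add: Q_def p_def idx_def)
  qed
  ultimately show ?thesis using that by blast
qed

lemma abs_sum_ge_dominant_term:
  fixes c \<beta> e :: "nat \<Rightarrow> real"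
  assumes "k < n" and c: "\<And>l. l < n \<Longrightarrow> \<bar>c l\<bar> \<le> Mx"
    and dominant: "\<beta>0 \<le> \<bar>\<beta> k\<bar>" and rest: "\<And>l. l < n \<Longrightarrow> l \<noteq> k \<Longrightarrow> \<bar>\<beta> l\<bar> \<le> e l"
    and rest_sum: "(\<Sum>l\<in>{..<n} - {k}. e l) \<le> E"
  shows "\<bar>c k\<bar> * \<beta>0 - E * Mx \<le> \<bar>\<Sum>l<n. c l * \<beta> l\<bar>"
proof -
  have "0 \<le> Mx" using c[OF \<open>k < n\<close>] by linarith
  have "\<bar>\<Sum>l\<in>{..<n} - {k}. c l * \<beta> l\<bar> \<le> (\<Sum>l\<in>{..<n} - {k}. Mx * e l)"
  proof (intro order_trans[OF sum_abs] sum_mono)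
    fix l assume "l \<in> {..<n} - {k}"
    then show "\<bar>c l * \<beta> l\<bar> \<le> Mx * e l"
      using c[of l] rest[of l] by (auto simp: abs_mult intro: mult_mono)
  qed
  also have "\<dots> \<le> Mx * E" using rest_sum \<open>0 \<le> Mx\<close> by (simp add: sum_distrib_left[symmetric] mult_left_mono)
  finally have "\<bar>\<Sum>l\<in>{..<n} - {k}. c l * \<beta> l\<bar> \<le> E * Mx" by (simp add: mult.commute)
  moreover have "\<bar>c k\<bar> * \<beta>0 \<le> \<bar>c k * \<beta> k\<bar>" using dominant by (simp add: abs_mult mult_left_mono)
  moreover have "(\<Sum>l<n. c l * \<beta> l) = c k * \<beta> k + (\<Sum>l\<in>{..<n} - {k}. c l * \<beta> l)"
    using \<open>k < n\<close> by (simp add: sum.remove)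
  ultimately show ?thesis by linarith
qed

lemma gliding_hump_lower_bound:
  fixes a :: "nat \<Rightarrow> nat \<Rightarrow> real" and p idx :: "nat \<Rightarrow> nat"
  assumes "\<eta> > 0" and p: "strict_mono p"
    and small: "\<And>k N. N \<le> p k \<Longrightarrow> \<bar>a (idx k) N\<bar> \<le> \<eta> / (real k + 1)"
    and near_one: "\<And>k l N. k < l \<Longrightarrow> p l \<le> N \<Longrightarrow> \<bar>a (idx k) N - 1\<bar> \<le> \<eta> / 2 ^ l"
    and "k < n" and c: "\<And>l. l < n \<Longrightarrow> \<bar>c l\<bar> \<le> Mx"
  shows "\<bar>c k\<bar> * (1 - 2 * \<eta>) - 6 * \<eta> * Mx
    \<le> \<bar>\<Sum>l<n. c l * (a (idx k) (p (Suc l)) - a (idx k) (p l))\<bar>"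
proof (rule abs_sum_ge_dominant_term[OF \<open>k < n\<close> c])
  define e where "e l = (if l < k then 2 * (\<eta> / (real k + 1)) else 0) + 2 * \<eta> * (1 / 2) ^ l" for l
  have p_mono: "i \<le> j \<Longrightarrow> p i \<le> p j" for i j using p by (simp add: strict_mono_less_eq)
  show "\<bar>a (idx k) (p (Suc l)) - a (idx k) (p l)\<bar> \<le> e l" if "l \<noteq> k" for l
  proof (cases "l < k")
    case True
    then have "\<bar>a (idx k) (p (Suc l))\<bar> \<le> \<eta> / (real k + 1)" "\<bar>a (idx k) (p l)\<bar> \<le> \<eta> / (real k + 1)"
      using small p_mono by simp_all
    moreover have "0 \<le> 2 * \<eta> * (1 / 2) ^ l" using \<open>\<eta> > 0\<close> by simp
    ultimately show ?thesis using True unfolding e_def abs_le_iff by simp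
  next
    case False
    then have "k < l" using that by simp
    then have "\<bar>a (idx k) (p (Suc l)) - 1\<bar> \<le> \<eta> / 2 ^ l" "\<bar>a (idx k) (p l) - 1\<bar> \<le> \<eta> / 2 ^ l"
      using near_one p_mono by simp_all
    then show ?thesis using False by (simp add: e_def abs_le_iff power_one_over)
  qed
  have "a (idx k) (p (Suc k)) \<ge> 1 - \<eta>"
  proof -
    have "(1 :: real) \<le> 2 ^ Suc k" by (rule one_le_power) simp
    then have "\<eta> / 2 ^ Suc k \<le> \<eta>" using \<open>\<eta> > 0\<close> by (simp add: field_simps)
    then show ?thesis using near_one[of k "Suc k" "p (Suc k)"] by (simp add: abs_le_iff)
  qed
  moreover have "a (idx k) (p k) \<le> \<eta>"
  proof -
    have "\<eta> / (real k + 1) \<le> \<eta>" using \<open>\<eta> > 0\<close> by (simp add: field_simps)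
    then show ?thesis using small[of "p k" k] by (simp add: abs_le_iff)
  qed
  ultimately show "1 - 2 * \<eta> \<le> \<bar>a (idx k) (p (Suc k)) - a (idx k) (p k)\<bar>" by linarith
  have "(\<Sum>l<n. (if l < k then 2 * (\<eta> / (real k + 1)) else 0)) = (\<Sum>l<k. 2 * (\<eta> / (real k + 1)))"
    using \<open>k < n\<close> by (intro sum.mono_neutral_cong_right) auto
  also have "\<dots> \<le> 2 * \<eta>" using \<open>\<eta> > 0\<close> by (simp add: field_simps)
  finally have "(\<Sum>l<n. e l) \<le> 2 * \<eta> + 2 * \<eta> * (\<Sum>l<n. (1 / 2 :: real) ^ l)"
    by (simp add: e_def sum.distrib sum_distrib_left)
  also have "(\<Sum>l<n. (1 / 2 :: real) ^ l) \<le> 2"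
    using geometric_sum_less[of "1 / 2 :: real" "{..<n}"] by simp
  finally have "(\<Sum>l<n. e l) \<le> 6 * \<eta>" using \<open>\<eta> > 0\<close> by simp
  moreover have "(\<Sum>l\<in>{..<n} - {k}. e l) \<le> (\<Sum>l<n. e l)"
    using \<open>\<eta> > 0\<close> by (intro sum_mono2) (auto simp: e_def)
  ultimately show "(\<Sum>l\<in>{..<n} - {k}. e l) \<le> 6 * \<eta>" by linarith
qed

section \<open>Fixing a copy of c_0\<close>

text \<open>A weak* cluster argument: a bounded sequence of functionals converges along a
subsequence on a countable set, so consecutive differences become null on its span.\<close>

lemma bounded_functionals_null_differences:
  fixes \<phi> :: "nat \<Rightarrow> 'a::real_normed_vector \<Rightarrow> real"
  assumes lin: "\<And>k. linear (\<phi> k)" and bound: "\<And>k y. \<bar>\<phi> k y\<bar> \<le> c * norm y"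
    and "countable V"
  obtains r :: "nat \<Rightarrow> nat" where "strict_mono r"
    and "\<And>y. y \<in> span V \<Longrightarrow> (\<lambda>i. \<phi> (r (2 * i)) y - \<phi> (r (2 * i + 1)) y) \<longlonglongrightarrow> 0"
proof -
  define v where "v = from_nat_into V"
  have "bounded (range (\<lambda>i. \<phi> i (v q)))" for q
    using bound by (intro boundedI[where B = "c * norm (v q)"]) auto
  then obtain r :: "nat \<Rightarrow> nat" where "strict_mono r"
    and conv: "\<And>q. \<exists>l\<in>UNIV. (\<lambda>i. \<phi> (r i) (v q)) \<longlonglongrightarrow> l"
    using diagonal_convergent_subsequence[of "\<lambda>_. UNIV" "\<lambda>q i. \<phi> i (v q)"]
      boundedly_compact_UNIV by blast
  have even: "strict_mono (\<lambda>i::nat. 2 * i)" and odd: "strict_mono (\<lambda>i::nat. 2 * i + 1)"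
    by (auto simp: strict_mono_def)
  have basis: "(\<lambda>i. \<phi> (r (2 * i)) z - \<phi> (r (2 * i + 1)) z) \<longlonglongrightarrow> 0" if z: "z \<in> V" for z
  proof -
    obtain q where "v q = z" using from_nat_into_surj[OF \<open>countable V\<close> z] v_def by blast
    obtain l where l: "(\<lambda>i. \<phi> (r i) z) \<longlonglongrightarrow> l" using conv[of q] \<open>v q = z\<close> by blast
    have "(\<lambda>i. \<phi> (r (2 * i)) z - \<phi> (r (2 * i + 1)) z) \<longlonglongrightarrow> l - l"
      using LIMSEQ_subseq_LIMSEQ[OF l even] LIMSEQ_subseq_LIMSEQ[OF l odd]
      by (intro tendsto_diff) (simp_all add: o_def)
    then show ?thesis by simp
  qed
  have "(\<lambda>i. \<phi> (r (2 * i)) y - \<phi> (r (2 * i + 1)) y) \<longlonglongrightarrow> 0" if "y \<in> span V" for y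
    using that
  proof (induction rule: span_induct_alt)
    case base
    then show ?case by (simp add: linear_0[OF lin])
  next
    case (step a x y)
    have "(\<lambda>i. a * (\<phi> (r (2 * i)) x - \<phi> (r (2 * i + 1)) x)
        + (\<phi> (r (2 * i)) y - \<phi> (r (2 * i + 1)) y)) \<longlonglongrightarrow> a * 0 + 0"
      by (intro tendsto_intros basis step)
    then show ?case by (simp add: linear_add[OF lin] linear_scale[OF lin] algebra_simps)
  qed
  then show ?thesis using that \<open>strict_mono r\<close> by blast
qed

lemma lift_bounded_c0_family:
  fixes T :: "'a::banach \<Rightarrow> 'b::banach" and J :: "(nat \<Rightarrow> real) \<Rightarrow> 'b"
  assumes "bounded_linear T" and "surj T" and J: "c0_embedding J"
    and a: "\<And>M. a M \<in> c0" and a_bound: "\<And>M. sup_norm (a M) \<le> 1"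
  obtains w B where "\<And>M. T (w M) = J (a M)" and "\<And>M. norm (w M) \<le> B"
proof -
  obtain C where "C > 0" and lift: "\<And>y. \<exists>x. T x = y \<and> norm x \<le> C * norm y"
    using open_mapping_bounded_preimage[OF assms(1,2)] by blast
  obtain MJ where upper: "\<And>a. a \<in> c0 \<Longrightarrow> norm (J a) \<le> MJ * sup_norm a"
    using c0_embeddingE[OF J] by metis
  have "\<forall>M. \<exists>x. T x = J (a M) \<and> norm x \<le> C * norm (J (a M))" using lift by blast
  then obtain w where w: "\<And>M. T (w M) = J (a M)" "\<And>M. norm (w M) \<le> C * norm (J (a M))"
    by metis
  have "norm (w M) \<le> C * \<bar>MJ\<bar>" for M
  proof -
    have "norm (J (a M)) \<le> \<bar>MJ\<bar> * sup_norm (a M)"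
      using upper[OF a] sup_norm_nonneg[OF a] by (meson abs_ge_self mult_right_mono order_trans)
    also have "\<dots> \<le> \<bar>MJ\<bar>" using a_bound[of M] by (simp add: mult_left_le)
    finally show ?thesis using w(2)[of M] \<open>C > 0\<close> by (meson mult_left_mono less_imp_le order_trans)
  qed
  then show ?thesis using that w(1) by blast
qed



lemma c0_difference_functionals:
  fixes J :: "(nat \<Rightarrow> real) \<Rightarrow> 'b::real_normed_vector"
  assumes J: "c0_embedding J" and "countable V"
  obtains \<psi> :: "nat \<Rightarrow> 'b \<Rightarrow> real" and c and r :: "nat \<Rightarrow> nat"
  where "c > 0" and "strict_mono r" and "\<And>i. bounded_linear (\<psi> i)"
    and "\<And>i y. \<bar>\<psi> i y\<bar> \<le> c * norm y"
    and "\<And>i a. a \<in> c0 \<Longrightarrow> \<psi> i (J a) = a (r (2 * i)) - a (r (2 * i + 1))"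
    and "\<And>y. y \<in> span V \<Longrightarrow> (\<lambda>i. \<psi> i y) \<longlonglongrightarrow> 0"
proof -
  obtain \<phi> c where "c > 0" and \<phi>_linear: "\<And>k. bounded_linear (\<phi> k)"
    and \<phi>_coord: "\<And>k a. a \<in> c0 \<Longrightarrow> \<phi> k (J a) = a k" and \<phi>_bound: "\<And>k y. \<bar>\<phi> k y\<bar> \<le> c * norm y"
    by (rule c0_embedding_coordinate_functionals[OF J]) blast
  have \<phi>_lin: "\<And>k. linear (\<phi> k)" using \<phi>_linear bounded_linear.linear by blast
  obtain r :: "nat \<Rightarrow> nat" where "strict_mono r"
    and null: "\<And>y. y \<in> span V \<Longrightarrow> (\<lambda>i. \<phi> (r (2 * i)) y - \<phi> (r (2 * i + 1)) y) \<longlonglongrightarrow> 0"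
    by (rule bounded_functionals_null_differences[where \<phi> = \<phi>, OF \<phi>_lin \<phi>_bound \<open>countable V\<close>])
      blast
  define \<psi> where "\<psi> i y = \<phi> (r (2 * i)) y - \<phi> (r (2 * i + 1)) y" for i y
  show ?thesis
  proof (rule that[where \<psi> = \<psi> and c = "2 * c" and r = r])
    show "bounded_linear (\<psi> i)" for i
      unfolding \<psi>_def[abs_def] by (intro bounded_linear_sub \<phi>_linear)
    show "\<bar>\<psi> i y\<bar> \<le> (2 * c) * norm y" for i y
      using \<phi>_bound[of "r (2 * i)" y] \<phi>_bound[of "r (2 * i + 1)" y] unfolding \<psi>_def by linarith
    show "\<psi> i (J a) = a (r (2 * i)) - a (r (2 * i + 1))" if "a \<in> c0" for i a
      using \<phi>_coord[OF that] by (simp add: \<psi>_def)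
    show "(\<lambda>i. \<psi> i y) \<longlonglongrightarrow> 0" if "y \<in> span V" for y
      using null[OF that] by (simp add: \<psi>_def)
  qed (use \<open>c > 0\<close> \<open>strict_mono r\<close> in simp_all)
qed

lemma c0_staircase_lifts:
  fixes T :: "'a::banach \<Rightarrow> 'b::banach" and \<psi> :: "nat \<Rightarrow> 'b \<Rightarrow> real" and r :: "nat \<Rightarrow> nat"
  assumes "bounded_linear T" and "surj T" and J: "c0_embedding J" and r: "strict_mono r"
    and \<psi>_J: "\<And>i a. a \<in> c0 \<Longrightarrow> \<psi> i (J a) = a (r (2 * i)) - a (r (2 * i + 1))"
  obtains w :: "nat \<Rightarrow> 'a" and B where "\<And>M. norm (w M) \<le> B" and "\<And>M i. \<psi> i (T (w M)) = (if i < M then 1 else 0)"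
proof -
  define stair :: "nat \<Rightarrow> nat \<Rightarrow> real" where "stair M n = (if \<exists>l<M. n = r (2 * l) then 1 else 0)" for M n
  have "stair M \<in> c0" for M
  proof (rule c0_eventually_zero)
    fix n assume "r (2 * M) \<le> n"
    moreover have "r (2 * l) < r (2 * M)" if "l < M" for l using that strict_mono_less[OF r] by simp
    ultimately show "stair M n = 0" unfolding stair_def by force
  qed
  moreover have "sup_norm (stair M) \<le> 1" for M by (rule sup_norm_le) (simp add: stair_def)
  ultimately obtain w B where w: "\<And>M. T (w M) = J (stair M)" and "\<And>M. norm (w M) \<le> B"
    by (rule lift_bounded_c0_family[where a = stair, OF assms(1-3)]) blast
  moreover have "\<psi> i (T (w M)) = (if i < M then 1 else 0)" for M i
  proof -
    have "(\<exists>l<M. r (2 * i) = r (2 * l)) \<longleftrightarrow> i < M" using strict_mono_eq[OF r] by auto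
    moreover have "\<not> (\<exists>l<M. r (2 * i + 1) = r (2 * l))" using strict_mono_eq[OF r] by presburger
    ultimately show ?thesis using w \<psi>_J \<open>stair M \<in> c0\<close> by (simp add: stair_def)
  qed
  ultimately show ?thesis using that by blast
qed

lemma shrinking_quotient_block_data:
  fixes E :: "nat \<Rightarrow> 'a::banach set" and T :: "'a \<Rightarrow> 'b::banach" and J :: "(nat \<Rightarrow> real) \<Rightarrow> 'b"
  assumes "unconditional_fin_dim_decomp E K" and shrinking: "is_fdd (fdd_dual E)"
    and T: "bounded_linear T" and "surj T" and J: "c0_embedding J"
  obtains \<psi> :: "nat \<Rightarrow> 'b \<Rightarrow> real" and c \<omega> B
  where "c > 0" and "\<And>i. bounded_linear (\<psi> i)" and "\<And>i y. \<bar>\<psi> i y\<bar> \<le> c * norm y"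
    and "\<And>j. \<omega> j \<in> E j" and "\<And>N. norm (\<Sum>j<N. \<omega> j) \<le> B"
    and "\<And>i. (\<lambda>N. \<psi> i (T (\<Sum>j<N. \<omega> j))) \<longlonglongrightarrow> 1"
    and "\<And>N. (\<lambda>i. \<psi> i (T (\<Sum>j<N. \<omega> j))) \<longlonglongrightarrow> 0"
proof -
  interpret unconditional_fin_dim_decomp E K by fact
  obtain V where "countable V" and V: "\<And>j. E j \<subseteq> span V"
    using countable_spanning_set by blast
  obtain \<psi> :: "nat \<Rightarrow> 'b \<Rightarrow> real" and c r where "c > 0" and r: "strict_mono r"
    and \<psi>_linear: "\<And>i. bounded_linear (\<psi> i)" and \<psi>_bound: "\<And>i y. \<bar>\<psi> i y\<bar> \<le> c * norm y"
    and \<psi>_J: "\<And>i a. a \<in> c0 \<Longrightarrow> \<psi> i (J a) = a (r (2 * i)) - a (r (2 * i + 1))"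
    and null: "\<And>y. y \<in> span (T ` V) \<Longrightarrow> (\<lambda>i. \<psi> i y) \<longlonglongrightarrow> 0"
    by (rule c0_difference_functionals[OF J countable_image[OF \<open>countable V\<close>]]) blast
  have null_E: "(\<lambda>i. \<psi> i (T y)) \<longlonglongrightarrow> 0" if "y \<in> E j" for y j
    using null that V span_linear_image[OF bounded_linear.linear[OF T], of V] by blast
  obtain w :: "nat \<Rightarrow> 'a" and B where w_bound: "\<And>M. norm (w M) \<le> B"
    and staircase: "\<And>M i. \<psi> i (T (w M)) = (if i < M then 1 else 0)"
    by (rule c0_staircase_lifts[OF T \<open>surj T\<close> J r \<psi>_J]) (assumption, rule that)
  obtain \<sigma> :: "nat \<Rightarrow> nat" and \<omega> where "strict_mono \<sigma>" and \<omega>: "\<And>j. \<omega> j \<in> E j"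
    and coord: "\<And>j. (\<lambda>M. fdd_proj E j (w (\<sigma> M))) \<longlonglongrightarrow> \<omega> j"
    by (rule coordinatewise_convergent_subsequence[where w = w, OF w_bound]) blast
  have "norm (\<Sum>j<N. \<omega> j) \<le> \<bar>K\<bar> * B" for N
    using norm_sum_coordinate_limits_le[of "w \<circ> \<sigma>"] w_bound coord by simp
  moreover have "(\<lambda>N. \<psi> i (T (\<Sum>j<N. \<omega> j))) \<longlonglongrightarrow> 1" for i
  proof (rule tendsto_functional_sum_coordinate_limits[of "\<lambda>y. \<psi> i (T y)" "w \<circ> \<sigma>"])
    have "eventually (\<lambda>M. \<psi> i (T (w (\<sigma> M))) = 1) sequentially"
      unfolding eventually_sequentially
    proof (intro exI allI impI)
      fix M assume "Suc i \<le> M"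
      then have "i < \<sigma> M" using seq_suble[OF \<open>strict_mono \<sigma>\<close>, of M] by linarith
      then show "\<psi> i (T (w (\<sigma> M))) = 1" using staircase by simp
    qed
    then show "(\<lambda>M. \<psi> i (T ((w \<circ> \<sigma>) M))) \<longlonglongrightarrow> 1" by (simp add: tendsto_eventually)
  qed (use shrinking bounded_linear_compose[OF \<psi>_linear T] w_bound coord in auto)
  moreover have "(\<lambda>i. \<psi> i (T (\<Sum>j<N. \<omega> j))) \<longlonglongrightarrow> 0" for N
  proof -
    have "(\<lambda>i. \<Sum>j<N. \<psi> i (T (\<omega> j))) \<longlonglongrightarrow> 0"
      by (intro tendsto_null_sum null_E[OF \<omega>])
    then show ?thesis
      by (simp add: linear_sum[OF bounded_linear.linear[OF bounded_linear_compose[OF \<psi>_linear T]]])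
  qed
  ultimately show ?thesis using that \<open>c > 0\<close> \<psi>_linear \<psi>_bound \<omega> by blast
qed

lemma fixes_copy_of_c0_of_block_data:
  fixes E :: "nat \<Rightarrow> 'a::banach set" and T :: "'a \<Rightarrow> 'b::real_normed_vector"
    and \<psi> :: "nat \<Rightarrow> 'b \<Rightarrow> real"
  assumes "unconditional_fin_dim_decomp E K" and T: "bounded_linear T"
    and "c > 0" and \<psi>_linear: "\<And>i. bounded_linear (\<psi> i)" and \<psi>_bound: "\<And>i y. \<bar>\<psi> i y\<bar> \<le> c * norm y"
    and \<omega>: "\<And>j. \<omega> j \<in> E j" and \<Omega>_bound: "\<And>N. norm (\<Sum>j<N. \<omega> j) \<le> B"
    and to_one: "\<And>i. (\<lambda>N. \<psi> i (T (\<Sum>j<N. \<omega> j))) \<longlonglongrightarrow> 1"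
    and to_zero: "\<And>N. (\<lambda>i. \<psi> i (T (\<Sum>j<N. \<omega> j))) \<longlonglongrightarrow> 0"
  shows "fixes_copy_of_c0 T"
proof -
  interpret unconditional_fin_dim_decomp E K by fact
  define a where "a i N = \<psi> i (T (\<Sum>j<N. \<omega> j))" for i N
  obtain p idx :: "nat \<Rightarrow> nat" where "p 0 = 0" and p: "strict_mono p"
    and small: "\<And>k N. N \<le> p k \<Longrightarrow> \<bar>a (idx k) N\<bar> \<le> (1 / 16) / (real k + 1)"
    and near_one: "\<And>k l N. k < l \<Longrightarrow> p l \<le> N \<Longrightarrow> \<bar>a (idx k) N - 1\<bar> \<le> (1 / 16) / 2 ^ l"
    using gliding_hump_blocks[of a "1 / 16"] to_one to_zero unfolding a_def by auto
  define g where "g l = (\<Sum>j\<in>{p l..<p (Suc l)}. \<omega> j)" for l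
  have "c0_block_estimates g T (\<bar>K\<bar> * B) (7 / 8 / c) (3 / 8 / c)"
  proof (intro c0_block_estimates.intro T)
    fix n and d :: "nat \<Rightarrow> real" and Mx :: real
    assume "0 \<le> Mx" and d: "\<And>l. l < n \<Longrightarrow> \<bar>d l\<bar> \<le> Mx"
    have "norm (\<Sum>l<n. d l *\<^sub>R g l) \<le> Mx * K * norm (\<Sum>j<p n. \<omega> j)"
      unfolding g_def by (rule norm_block_combination_le[OF \<omega> p \<open>p 0 = 0\<close> d])
    also have "\<dots> \<le> Mx * \<bar>K\<bar> * norm (\<Sum>j<p n. \<omega> j)"
      using \<open>0 \<le> Mx\<close> by (intro mult_right_mono mult_left_mono) auto
    also have "\<dots> \<le> Mx * \<bar>K\<bar> * B"
      using \<open>0 \<le> Mx\<close> \<Omega>_bound[of "p n"] by (intro mult_left_mono) auto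
    finally show "norm (\<Sum>l<n. d l *\<^sub>R g l) \<le> \<bar>K\<bar> * B * Mx" by (simp add: mult_ac)
  next
    fix n and d :: "nat \<Rightarrow> real" and Mx :: real and k
    assume "k < n" and d: "\<And>l. l < n \<Longrightarrow> \<bar>d l\<bar> \<le> Mx"
    interpret \<psi>T: bounded_linear "\<lambda>y. \<psi> (idx k) (T y)"
      using bounded_linear_compose[OF \<psi>_linear T] .
    have g_diff: "g l = (\<Sum>j<p (Suc l). \<omega> j) - (\<Sum>j<p l. \<omega> j)" for l
      using sum.atLeastLessThan_concat[of 0 "p l" "p (Suc l)" \<omega>] strict_mono_less_eq[OF p, of l "Suc l"]
      by (simp add: g_def atLeast0LessThan eq_diff_eq add.commute)
    have "\<bar>d k\<bar> * (1 - 2 * (1 / 16)) - 6 * (1 / 16) * Mx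
        \<le> \<bar>\<Sum>l<n. d l * (a (idx k) (p (Suc l)) - a (idx k) (p l))\<bar>"
      using gliding_hump_lower_bound[where \<eta> = "1 / 16" and a = a and idx = idx and c = d,
          OF _ p small near_one \<open>k < n\<close> d]
      by simp
    also have "\<dots> = \<bar>\<psi> (idx k) (T (\<Sum>l<n. d l *\<^sub>R g l))\<bar>"
      by (simp add: \<psi>T.sum \<psi>T.scaleR \<psi>T.diff g_diff a_def)
    also have "\<dots> \<le> c * norm (T (\<Sum>l<n. d l *\<^sub>R g l))"
      by (rule \<psi>_bound)
    finally have "\<bar>d k\<bar> * (7 / 8) - 3 / 8 * Mx \<le> c * norm (T (\<Sum>l<n. d l *\<^sub>R g l))"
      by simp
    then show "7 / 8 / c * \<bar>d k\<bar> - 3 / 8 / c * Mx \<le> norm (T (\<Sum>l<n. d l *\<^sub>R g l))"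
      using \<open>c > 0\<close> by (simp add: field_simps)
  qed (use \<open>c > 0\<close> in \<open>simp_all add: divide_strict_right_mono\<close>)
  then show ?thesis by (rule c0_block_estimates.fixes_copy_of_c0)
qed


lemma fixes_copy_of_c0_if_contains_c0:
  fixes E :: "nat \<Rightarrow> 'a::banach set" and T :: "'a \<Rightarrow> 'b::banach"
  assumes "shrinking_fdd E" and "unconditional_fdd K E" and "bounded_linear T" and "surj T"
    and "contains_c0 TYPE('b)"
  shows "fixes_copy_of_c0 T"
proof -
  obtain J :: "(nat \<Rightarrow> real) \<Rightarrow> 'b" where J: "c0_embedding J"
    using \<open>contains_c0 TYPE('b)\<close> unfolding contains_c0_def by blast
  have fdd: "unconditional_fin_dim_decomp E K" and shrinking: "is_fdd (fdd_dual E)"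
    using assms(1,2) unfolding unconditional_fin_dim_decomp_def unconditional_fin_dim_decomp_axioms_def
      fin_dim_decomp_def shrinking_fdd_def by blast+
  obtain \<psi> :: "nat \<Rightarrow> 'b \<Rightarrow> real" and c \<omega> B where "c > 0" and "\<And>i. bounded_linear (\<psi> i)"
    and "\<And>i y. \<bar>\<psi> i y\<bar> \<le> c * norm y" and "\<And>j. \<omega> j \<in> E j" and "\<And>N. norm (\<Sum>j<N. \<omega> j) \<le> B"
    and "\<And>i. (\<lambda>N. \<psi> i (T (\<Sum>j<N. \<omega> j))) \<longlonglongrightarrow> 1"
    and "\<And>N. (\<lambda>i. \<psi> i (T (\<Sum>j<N. \<omega> j))) \<longlonglongrightarrow> 0"
    by (rule shrinking_quotient_block_data[OF fdd shrinking \<open>bounded_linear T\<close> \<open>surj T\<close> J]) blast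
  then show ?thesis by (intro fixes_copy_of_c0_of_block_data[OF fdd \<open>bounded_linear T\<close>])
qed

lemma contains_c0_if_fixes_copy_of_c0:
  fixes T :: "'a::real_normed_vector \<Rightarrow> 'b::real_normed_vector"
  assumes "bounded_linear T" and "fixes_copy_of_c0 T"
  shows "contains_c0 TYPE('b)"
proof -
  obtain J :: "(nat \<Rightarrow> real) \<Rightarrow> 'a" and m where "c0_embedding J" and "m > 0"
    and "\<forall>z\<in>J ` c0. m * norm z \<le> norm (T z)"
    using \<open>fixes_copy_of_c0 T\<close> unfolding fixes_copy_of_c0_def by blast
  then have "c0_embedding (\<lambda>a. T (J a))"
    using c0_embedding_compose[OF _ \<open>bounded_linear T\<close>] by blast
  then show ?thesis unfolding contains_c0_def by blast
qed

theorem corollary1p10: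
  fixes E :: "nat \<Rightarrow> 'a::banach set" and K :: real and T :: "'a \<Rightarrow> 'b::banach"
  assumes "shrinking_fdd E" and "unconditional_fdd K E"
    and "bounded_linear T" and "surj T"
  shows "contains_c0 TYPE('b) \<longleftrightarrow> fixes_copy_of_c0 T"
  using fixes_copy_of_c0_if_contains_c0[OF assms] contains_c0_if_fixes_copy_of_c0[OF assms(3)]
  by blast

end
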